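(* Fix $\hat\alpha\in(0,(b-a)^{-1/2})$, $\hat\beta=\hat\alpha(1-(b-a)\hat\alpha^2)$. For small $\varepsilon>0$ let $c=1+\frac12\varepsilon^2$, $\alpha=\varepsilon\hat\alpha$, and $\lambda=\frac12\varepsilon^3\Lambda$. Then for $j,k\in\{0,1\}$, $\big\|I_\varepsilon^{-1}\big(\varepsilon^{3-j}\partial^jS^{-k}B^{-1}(\lambda-Q_-)^{-1}\big)I_\varepsilon-2\partial^j(\Lambda-\partial+(b-a)\partial^3)^{-1}\big\|_{L^2_{\hat\alpha}\to L^2_{\hat\alpha}}\to0$ as $\varepsilon\to0$, uniformly for $\Lambda\in\mathbb C$ with $\operatorname{Re}\Lambda\ge-\hat\beta/2$.
   Context: Fix $0<a<b$, $B=I-b\partial^2$ ($\partial=\partial_x$). $L^2_\alpha=\{g:e^{\alpha x}g\in L^2(\mathbb R)\}$. Fourier multipliers act on $L^2_\alpha$ via symbols evaluated at $k+i\alpha$ (with $\hat g(k)=\int ge^{-ikx}dx$, $\partial$ has symbol $i\xi$). $S$ has symbol $\hat S(\xi)=\sqrt{(1+a\xi^2)/(1+b\xi^2)}$ (principal branch), $Q_-=c\partial-S\partial$ (symbol $i\xi c-i\xi\hat S(\xi)$). $(I_\varepsilon g)(x)=\sqrt\varepsilon\,g(\varepsilon x)$ is an isometry $L^2_{\hat\alpha}\to L^2_{\varepsilon\hat\alpha}$. *)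

theory Defs
  imports "HOL-Analysis.Analysis"
begin

text \<open>A function g in L2_alpha is represented by
  h(k) = ghat(k + i alpha) (k real), which by Plancherel is (up to the factor sqrt(2 pi),
  irrelevant for operator norms) an isometry of L2_alpha onto L2(R).
  A Fourier multiplier with symbol m then acts as multiplication by m(k + i alpha).\<close>

definition l2norm :: "(real \<Rightarrow> complex) \<Rightarrow> ennreal" where
  "l2norm h = (let I = (\<integral>\<^sup>+ x. ennreal ((cmod (h x))\<^sup>2) \<partial>lborel) in
      if I = \<infinity> then \<infinity> else ennreal (sqrt (enn2real I)))"

definition L2space :: "(real \<Rightarrow> complex) set" where
  "L2space = {h. h \<in> borel_measurable lborel \<and> l2norm h < \<infinity>}"

definition op_norm :: "((real \<Rightarrow> complex) \<Rightarrow> (real \<Rightarrow> complex)) \<Rightarrow> ennreal" where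
  "op_norm T = (SUP h \<in> {h \<in> L2space. l2norm h \<noteq> 0}. l2norm (T h) / l2norm h)"

definition mult_op :: "real \<Rightarrow> (complex \<Rightarrow> complex) \<Rightarrow> (real \<Rightarrow> complex) \<Rightarrow> (real \<Rightarrow> complex)" where
  "mult_op \<alpha> m h = (\<lambda>k. m (complex_of_real k + \<i> * complex_of_real \<alpha>) * h k)"

text \<open>(I_eps g)(x) = sqrt eps g(eps x), L2_ahat \<rightarrow> L2_(eps ahat), on the Fourier side:
  (I_eps g)^(k + i eps ahat) = eps^(-1/2) ghat((k + i eps ahat)/eps).\<close>
definition I_eps :: "real \<Rightarrow> (real \<Rightarrow> complex) \<Rightarrow> (real \<Rightarrow> complex)" where
  "I_eps \<epsilon> h = (\<lambda>k. h (k / \<epsilon>) / complex_of_real (sqrt \<epsilon>))"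

definition I_eps_inv :: "real \<Rightarrow> (real \<Rightarrow> complex) \<Rightarrow> (real \<Rightarrow> complex)" where
  "I_eps_inv \<epsilon> h = (\<lambda>k. complex_of_real (sqrt \<epsilon>) * h (\<epsilon> * k))"

text \<open>Symbols (d has symbol i xi).\<close>
definition S_sym :: "real \<Rightarrow> real \<Rightarrow> complex \<Rightarrow> complex" where
  "S_sym a b \<xi> = csqrt ((1 + of_real a * \<xi>\<^sup>2) / (1 + of_real b * \<xi>\<^sup>2))"

definition B_sym :: "real \<Rightarrow> complex \<Rightarrow> complex" where
  "B_sym b \<xi> = 1 - of_real b * (\<i> * \<xi>)\<^sup>2"

definition Qm_sym :: "real \<Rightarrow> real \<Rightarrow> real \<Rightarrow> complex \<Rightarrow> complex" where
  "Qm_sym a b c \<xi> = \<i> * \<xi> * of_real c - \<i> * \<xi> * S_sym a b \<xi>"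

text \<open>Symbol of eps^(3-j) d^j S^(-n) B^(-1) (lam - Q_-)^(-1).\<close>
definition lhs_sym :: "real \<Rightarrow> real \<Rightarrow> real \<Rightarrow> complex \<Rightarrow> real \<Rightarrow> nat \<Rightarrow> nat \<Rightarrow> complex \<Rightarrow> complex" where
  "lhs_sym a b c lam \<epsilon> j n \<xi> =
     of_real (\<epsilon> ^ (3 - j)) * (\<i> * \<xi>) ^ j * (inverse (S_sym a b \<xi>)) ^ n
     * inverse (B_sym b \<xi>) * inverse (lam - Qm_sym a b c \<xi>)"

text \<open>Symbol of 2 d^j (Lam - d + (b-a) d^3)^(-1).\<close>
definition lim_sym :: "real \<Rightarrow> real \<Rightarrow> complex \<Rightarrow> nat \<Rightarrow> complex \<Rightarrow> complex" where
  "lim_sym a b Lam j \<xi> =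
     2 * (\<i> * \<xi>) ^ j * inverse (Lam - \<i> * \<xi> + of_real (b - a) * (\<i> * \<xi>) ^ 3)"

end

theory Submission
  imports Defs
begin

text \<open>On the Fourier side every operator involved is a multiplier, and conjugating by
  \<open>I_eps \<epsilon>\<close> replaces the frequency \<open>k + i\<alpha>h\<close> by \<open>\<xi> = \<epsilon>(k + i\<alpha>h) = x + i\<eta>\<close>; so the operator
  norm is at most the supremum over \<open>k\<close> of the difference of the two symbols.
  Put \<open>Q\<^sub>0(\<xi>) = i\<xi>(\<epsilon>\<^sup>2 + (b - a)\<xi>\<^sup>2)/2\<close>: then \<open>\<lambda> - Q\<^sub>0(\<xi>) = \<epsilon>\<^sup>3/2 \<cdot> (\<Lambda> - i\<zeta> + (b - a)(i\<zeta>)\<^sup>3)\<close>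
  with \<open>\<zeta> = \<xi>/\<epsilon>\<close>, so the limit symbol is exactly \<open>\<epsilon>\<^bsup>3-j\<^esup>(i\<xi>)\<^sup>j/(\<lambda> - Q\<^sub>0(\<xi>))\<close>, while
  \<open>Q\<^sub>-(\<xi>) - Q\<^sub>0(\<xi>) = i\<xi>E(\<xi>)\<close> with \<open>E = O((\<epsilon>\<^sup>2 + |\<xi>|\<^sup>2)\<^sup>2)\<close>.
  The heart of the matter is coercivity: from \<open>Re S \<le> (3 + |S\<^sup>2|\<^sup>2)/4\<close> and \<open>x Im S \<le> 0\<close> one gets
  \<open>Re(\<lambda> - Q\<^sub>-(\<xi>)) \<ge> \<eta>(\<epsilon>\<^sup>2 gap + G)\<close> with \<open>gap = (1 - (b - a)\<alpha>h\<^sup>2)/8 > 0\<close> and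
  \<open>G \<approx> (b - a)(x\<^sup>2 + |\<xi>|\<^sup>4)/|B(\<xi>)|\<^sup>2\<close>. Hence for \<open>x\<^sup>2 \<le> \<rho>\<close> the difference of symbols is
  \<open>O(\<epsilon> + \<rho>)\<close>, and for \<open>x\<^sup>2 \<ge> \<rho>\<close> each symbol separately is \<open>O(\<epsilon>/\<rho>)\<close>; choose \<open>\<rho>\<close> small,
  then \<open>\<epsilon>\<close> small.\<close>

lemma low_frequency_arith:
  fixes \<epsilon> \<alpha>h c ss A CV CE Vn En Y1 Y2 r \<rho> :: real and j :: nat
  assumes e: "0<\<epsilon>" "0<\<alpha>h" "0<c" "0<ss" "0\<le>Vn" "0\<le>En" "0\<le>r" "j\<le>1" "0\<le>\<rho>" "0 \<le> CV*A" "0 \<le> CE"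
    and y1: "\<epsilon>*\<alpha>h*c * ss \<le> Y1" and y2: "\<epsilon>*\<alpha>h*c * ss \<le> Y2"
    and v: "Vn \<le> CV*A * ss" and en: "En \<le> CE*(A * ss)^2" and r2: "r \<le> 2" and rr: "r^2 \<le> 2*\<rho>"
  shows "\<epsilon>^(3-j) * r^j * (Vn/Y1 + r*En/(Y1*Y2))
     \<le> (\<epsilon>^2 + 2*\<epsilon>) * (CV*A/(\<alpha>h*c)) + (2*\<epsilon> + 2*\<rho>) * (CE*A^2/(\<alpha>h*c)^2)"
proof -
  define Z where "Z = \<epsilon>*\<alpha>h*c * ss"
  define P1 where "P1 = CV*A/(\<alpha>h*c)"
  define P2 where "P2 = CE*A^2/(\<alpha>h*c)^2"
  have Z0: "Z > 0" using e by (simp add: Z_def)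
  have P10: "P1 \<ge> 0" using e by (simp add: P1_def)
  have P20: "P2 \<ge> 0" using e by (simp add: P2_def)
  have t1: "Vn/Y1 \<le> CV*A * ss/Z"
    using e v y1 Z0 by (intro frac_le) (auto simp: Z_def)
  have t1': "CV*A * ss/Z = P1/\<epsilon>" using e by (simp add: Z_def P1_def field_simps)
  have ZZ: "Z*Z \<le> Y1*Y2" using y1 y2 Z0 unfolding Z_def[symmetric] by (intro mult_mono) auto
  have t2: "r*En/(Y1*Y2) \<le> r*(CE*(A * ss)^2)/(Z*Z)"
    using e en ZZ Z0 by (intro frac_le mult_left_mono) (auto simp: mult_pos_pos)
  have t2': "r*(CE*(A * ss)^2)/(Z*Z) = r*P2/\<epsilon>^2" using e by (simp add: Z_def P2_def field_simps power2_eq_square)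
  have T: "Vn/Y1 + r*En/(Y1*Y2) \<le> P1/\<epsilon> + r*P2/\<epsilon>^2" using t1 t1' t2 t2' by linarith
  show ?thesis
  proof (cases j)
    case 0
    have "\<epsilon>^(3-j) * r^j * (Vn/Y1 + r*En/(Y1*Y2)) \<le> \<epsilon>^3 * (P1/\<epsilon> + r*P2/\<epsilon>^2)"
      using T e 0 by (simp add: mult_left_mono)
    also have "\<dots> = \<epsilon>^2 * P1 + \<epsilon> * r * P2" using e by (simp add: field_simps power2_eq_square power3_eq_cube)
    also have "\<dots> \<le> \<epsilon>^2 * P1 + \<epsilon> * 2 * P2"
      using r2 e P20 by (intro add_left_mono mult_right_mono mult_left_mono) auto
    also have "\<dots> \<le> (\<epsilon>^2 + 2*\<epsilon>) * P1 + (2*\<epsilon> + 2*\<rho>) * P2"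
      using P10 P20 e by (simp add: algebra_simps)
    finally show ?thesis by (simp add: P1_def P2_def)
  next
    case (Suc m) hence j1: "j = 1" using e by simp
    have "\<epsilon>^(3-j) * r^j * (Vn/Y1 + r*En/(Y1*Y2)) \<le> \<epsilon>^2 * r * (P1/\<epsilon> + r*P2/\<epsilon>^2)"
      using T e j1 by (simp add: mult_left_mono)
    also have "\<dots> = \<epsilon> * r * P1 + r^2 * P2" using e by (simp add: field_simps power2_eq_square)
    also have "\<dots> \<le> \<epsilon> * 2 * P1 + (2*\<rho>) * P2"
      using r2 rr e P10 P20 by (intro add_mono mult_right_mono mult_left_mono) auto
    also have "\<dots> \<le> (\<epsilon>^2 + 2*\<epsilon>) * P1 + (2*\<epsilon> + 2*\<rho>) * P2"
      using P10 P20 e by (simp add: algebra_simps)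
    finally show ?thesis by (simp add: P1_def P2_def)
  qed
qed

lemma high_frequency_lhs_arith:
  fixes \<epsilon> \<alpha>h \<kappa> Dn Y1 r C3 Sn SB :: real and j :: nat
  assumes e: "0<\<epsilon>" "0<\<alpha>h" "0<\<kappa>" "0\<le>r" "j\<le>1" "1/2 \<le> Dn" "r \<le> C3*Dn" "0 \<le> Sn" "Sn \<le> SB"
    and y1: "\<epsilon>*\<alpha>h*\<kappa> \<le> Y1"
  shows "\<epsilon>^(3-j) * r^j * (Sn / (Dn * Y1)) \<le> (2*\<epsilon>^2 + C3*\<epsilon>) * (SB/(\<alpha>h*\<kappa>))"
proof -
  define P where "P = SB/(\<alpha>h*\<kappa>)"
  have Dn0: "Dn > 0" using e by linarith
  have SB0: "SB \<ge> 0" using e by linarith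
  have P0: "P \<ge> 0" using e SB0 by (simp add: P_def)
  have C30: "C3 \<ge> 0"
  proof (rule ccontr)
    assume "\<not> C3 \<ge> 0" hence "C3*Dn < 0" using Dn0 by (simp add: mult_neg_pos)
    thus False using e by linarith
  qed
  have "Sn / (Dn * Y1) \<le> SB / (Dn * (\<epsilon>*\<alpha>h*\<kappa>))"
    using e y1 Dn0 SB0 by (intro frac_le mult_left_mono) (auto simp: mult_pos_pos)
  also have "\<dots> = P / (\<epsilon> * Dn)" using e Dn0 by (simp add: P_def field_simps)
  finally have T: "Sn / (Dn * Y1) \<le> P / (\<epsilon> * Dn)" .
  show ?thesis
  proof (cases j)
    case 0
    have "\<epsilon>^(3-j) * r^j * (Sn / (Dn * Y1)) \<le> \<epsilon>^3 * (P / (\<epsilon> * Dn))"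
      using mult_left_mono[OF T, of "\<epsilon>^3"] e 0 by simp
    also have "\<dots> = \<epsilon>^2 * P * (1/Dn)" using e Dn0 by (simp add: field_simps power2_eq_square power3_eq_cube)
    also have "\<dots> \<le> \<epsilon>^2 * P * 2"
    proof (rule mult_left_mono)
      show "1/Dn \<le> 2" using e Dn0 by (simp add: divide_le_eq)
    qed (use P0 in simp)
    also have "\<dots> \<le> (2*\<epsilon>^2 + C3*\<epsilon>) * P" using C30 P0 e by (simp add: algebra_simps)
    finally show ?thesis by (simp add: P_def)
  next
    case (Suc m) hence j1: "j = 1" using e by simp
    have "\<epsilon>^(3-j) * r^j * (Sn / (Dn * Y1)) \<le> \<epsilon>^2 * r * (P / (\<epsilon> * Dn))"
      using mult_left_mono[OF T, of "\<epsilon>^2 * r"] e j1 by simp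
    also have "\<dots> = \<epsilon> * P * (r / Dn)" using e Dn0 by (simp add: field_simps power2_eq_square)
    also have "\<dots> \<le> \<epsilon> * P * C3"
    proof (rule mult_left_mono)
      show "r / Dn \<le> C3" using e Dn0 by (simp add: divide_le_eq)
    qed (use P0 e in simp)
    also have "\<dots> \<le> (2*\<epsilon>^2 + C3*\<epsilon>) * P" using C30 P0 e by (simp add: algebra_simps)
    finally show ?thesis by (simp add: P_def)
  qed
qed

lemma high_frequency_lim_arith:
  fixes \<epsilon> \<alpha>h B Y2 r X \<rho> :: real and j :: nat
  assumes e: "0<\<epsilon>" "0<\<alpha>h" "0<B" "0<\<rho>" "\<rho> \<le> X" "0\<le>r" "r \<le> 1 + 2*X" "j\<le>1"
    and y2: "\<epsilon>*\<alpha>h*B*X \<le> Y2"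
  shows "\<epsilon>^(3-j) * r^j / Y2 \<le> (\<epsilon>^2/\<rho> + \<epsilon>*(1/\<rho> + 2)) * (1/(\<alpha>h*B))"
proof -
  define P where "P = 1/(\<alpha>h*B)"
  have X0: "X > 0" using e by linarith
  have P0: "P > 0" using e by (simp add: P_def)
  have Z0: "\<epsilon>*\<alpha>h*B*X > 0" using e X0 by simp
  have iX: "1/X \<le> 1/\<rho>" using e by (intro divide_left_mono) auto
  show ?thesis
  proof (cases j)
    case 0
    have "\<epsilon>^(3-j) * r^j / Y2 \<le> \<epsilon>^3 / (\<epsilon>*\<alpha>h*B*X)"
      using e y2 Z0 0 by (intro frac_le) auto
    also have "\<dots> = \<epsilon>^2 * P * (1/X)" using e X0 by (simp add: P_def field_simps power2_eq_square power3_eq_cube)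
    also have "\<dots> \<le> \<epsilon>^2 * P * (1/\<rho>)" using iX P0 by (intro mult_left_mono) auto
    also have "\<dots> \<le> (\<epsilon>^2/\<rho> + \<epsilon>*(1/\<rho> + 2)) * P" using P0 e by (simp add: algebra_simps)
    finally show ?thesis by (simp add: P_def)
  next
    case (Suc m) hence j1: "j = 1" using e by simp
    have "\<epsilon>^(3-j) * r^j / Y2 \<le> \<epsilon>^2 * r / (\<epsilon>*\<alpha>h*B*X)"
      using e y2 Z0 j1 by (intro frac_le) auto
    also have "\<dots> = \<epsilon> * P * (r/X)" using e X0 by (simp add: P_def field_simps power2_eq_square)
    also have "\<dots> \<le> \<epsilon> * P * (1/\<rho> + 2)"
    proof (rule mult_left_mono)
      have "r/X \<le> (1 + 2*X)/X" using e X0 by (intro divide_right_mono) auto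
      also have "\<dots> = 1/X + 2" using X0 by (simp add: field_simps)
      finally show "r/X \<le> 1/\<rho> + 2" using iX by linarith
    qed (use P0 e in simp)
    also have "\<dots> \<le> (\<epsilon>^2/\<rho> + \<epsilon>*(1/\<rho> + 2)) * P" using P0 e by (simp add: algebra_simps)
    finally show ?thesis by (simp add: P_def)
  qed
qed

lemma remainder_arith:
  fixes a b U e2 :: real
  assumes "0 < a" and "a < b" and U0: "0 \<le> U" and e20: "0 \<le> e2"
  shows "e2^2/4 + 2 * ((b-a)*b) * U^2 + (e2 + (b-a)*U) * (2*(b-a)*U + e2/2) / 2 \<le> 4 * (1+b)^2 * (e2 + U)^2"
proof -
  have ba: "b - a \<le> b" "0 \<le> b - a" "0 \<le> b" using assms by auto
  have A: "e2^2/4 \<le> (1+b)^2 * (e2 + U)^2"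
  proof -
    have "e2^2/4 \<le> (e2+U)^2" using U0 e20 by (simp add: power2_eq_square algebra_simps)
    also have "\<dots> \<le> (1+b)^2 * (e2+U)^2"
    proof -
      have "1 * 1 \<le> (1+b) * (1+b)" using ba by (intro mult_mono) auto
      hence "1 \<le> (1+b)^2" by (simp add: power2_eq_square)
      from mult_right_mono[OF this, of "(e2+U)^2"] show ?thesis by simp
    qed
    finally show ?thesis .
  qed
  have B: "2 * ((b-a)*b) * U^2 \<le> 2 * ((1+b)^2 * (e2 + U)^2)"
  proof -
    have "(b-a)*b \<le> (1+b)^2" using ba by (simp add: power2_eq_square algebra_simps mult_right_mono)
    moreover have "U^2 \<le> (e2+U)^2" using U0 e20 by (intro power_mono) auto
    ultimately have "((b-a)*b) * U^2 \<le> (1+b)^2 * (e2 + U)^2"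
      using ba by (intro mult_mono) auto
    thus ?thesis by simp
  qed
  have C: "(e2 + (b-a)*U) * (2*(b-a)*U + e2/2) / 2 \<le> (1+b)^2 * (e2 + U)^2"
  proof -
    have c1: "e2 + (b-a)*U \<le> (1+b) * (e2+U)" using ba U0 e20
      by (simp add: algebra_simps mult_right_mono add_increasing)
    have c2: "2*(b-a)*U + e2/2 \<le> 2 * ((1+b) * (e2+U))" using ba U0 e20
      by (simp add: algebra_simps mult_right_mono add_increasing)
    have "(e2 + (b-a)*U) * (2*(b-a)*U + e2/2) \<le> ((1+b) * (e2+U)) * (2 * ((1+b) * (e2+U)))"
      using c1 c2 ba U0 e20 by (intro mult_mono) auto
    thus ?thesis by (simp add: power2_eq_square algebra_simps)
  qed
  show ?thesis using A B C by simp
qed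

lemma op_norm_multiplier_le:
  fixes f :: "real \<Rightarrow> complex"
  assumes fb: "\<And>k. cmod (f k) \<le> M" and M0: "0 \<le> M"
  shows "op_norm (\<lambda>h k. f k * h k) \<le> ennreal M"
  unfolding op_norm_def
proof (rule SUP_least)
  fix h assume "h \<in> {h \<in> L2space. l2norm h \<noteq> 0}"
  hence hm: "h \<in> borel_measurable lborel" and hf: "l2norm h < \<infinity>" and h0: "l2norm h \<noteq> 0"
    by (auto simp: L2space_def)
  define I where "I = (\<integral>\<^sup>+ x. ennreal ((cmod (h x))\<^sup>2) \<partial>lborel)"
  define J where "J = (\<integral>\<^sup>+ x. ennreal ((cmod (f x * h x))\<^sup>2) \<partial>lborel)"
  have IT: "I \<noteq> \<infinity>" using hf by (auto simp: l2norm_def I_def[symmetric] Let_def split: if_splits)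
  have lh: "l2norm h = ennreal (sqrt (enn2real I))" using IT by (simp add: l2norm_def I_def[symmetric] Let_def)
  have meas: "(\<lambda>x. ennreal ((cmod (h x))\<^sup>2)) \<in> borel_measurable lborel" using hm by measurable
  have "J \<le> (\<integral>\<^sup>+ x. ennreal (M\<^sup>2) * ennreal ((cmod (h x))\<^sup>2) \<partial>lborel)"
    unfolding J_def
  proof (rule nn_integral_mono)
    fix x
    have "(cmod (f x * h x))\<^sup>2 \<le> M\<^sup>2 * (cmod (h x))\<^sup>2"
      by (simp add: norm_mult power_mult_distrib mult_right_mono power_mono fb)
    thus "ennreal ((cmod (f x * h x))\<^sup>2) \<le> ennreal (M\<^sup>2) * ennreal ((cmod (h x))\<^sup>2)"
      by (simp add: ennreal_mult[symmetric])
  qed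
  also have "\<dots> = ennreal (M\<^sup>2) * I" unfolding I_def by (rule nn_integral_cmult[OF meas])
  finally have JI: "J \<le> ennreal (M\<^sup>2) * I" .
  have JT: "J \<noteq> \<infinity>" using JI IT by (metis ennreal_mult_eq_top_iff ennreal_neq_top infinity_ennreal_def neq_top_trans)
  have lfh: "l2norm (\<lambda>k. f k * h k) = ennreal (sqrt (enn2real J))"
    using JT by (simp add: l2norm_def J_def[symmetric] Let_def)
  have "enn2real J \<le> enn2real (ennreal (M\<^sup>2) * I)"
    using JI IT by (intro enn2real_mono) (auto simp: ennreal_mult_less_top top.not_eq_extremum)
  hence JI': "enn2real J \<le> M\<^sup>2 * enn2real I" by (simp add: enn2real_mult)
  have sI: "sqrt (enn2real I) > 0" using h0 lh enn2real_nonneg[of I] by (auto simp del: enn2real_nonneg)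
  have "sqrt (enn2real J) \<le> sqrt (M\<^sup>2 * enn2real I)" using JI' by simp
  also have "\<dots> = M * sqrt (enn2real I)" using M0 by (simp add: real_sqrt_mult)
  finally have sJ: "sqrt (enn2real J) \<le> M * sqrt (enn2real I)" .
  show "l2norm (\<lambda>k. f k * h k) / l2norm h \<le> ennreal M"
    unfolding lfh lh using sI sJ
    by (subst divide_ennreal) (auto intro!: ennreal_leI simp: pos_divide_le_eq)
qed

lemma op_norm_rescaled_multiplier_diff_le:
  fixes m L :: "complex \<Rightarrow> complex"
  assumes "0 < \<epsilon>" and "0 \<le> M"
    and "\<And>k. cmod (m (of_real (\<epsilon>*k) + \<i> * of_real (\<epsilon>*\<alpha>h)) - L (of_real k + \<i> * of_real \<alpha>h)) \<le> M"
  shows "op_norm (\<lambda>h k. I_eps_inv \<epsilon> (mult_op (\<epsilon> * \<alpha>h) m (I_eps \<epsilon> h)) k - mult_op \<alpha>h L h k)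
    \<le> ennreal M"
proof -
  have "(\<lambda>h k. I_eps_inv \<epsilon> (mult_op (\<epsilon> * \<alpha>h) m (I_eps \<epsilon> h)) k - mult_op \<alpha>h L h k)
    = (\<lambda>h k. (m (of_real (\<epsilon>*k) + \<i> * of_real (\<epsilon>*\<alpha>h)) - L (of_real k + \<i> * of_real \<alpha>h)) * h k)"
    using \<open>0 < \<epsilon>\<close> by (auto simp: fun_eq_iff I_eps_inv_def I_eps_def mult_op_def algebra_simps)
  then show ?thesis using assms by (simp add: op_norm_multiplier_le)
qed

lemma Re_root_pos:
  fixes s w :: complex
  assumes "s^2 = w" and "0 \<le> Re s" and "0 < Re w"
  shows "0 < Re s"
proof (rule ccontr)
  assume "\<not> 0 < Re s"
  then have "Re w = - ((Im s)^2)" using assms(1,2) by (auto simp: power2_eq_square)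
  then show False using \<open>0 < Re w\<close> zero_le_power2[of "Im s"] by linarith
qed

lemma norm_one_minus_root_le:
  fixes s w :: complex
  assumes "s^2 = w" and "0 \<le> Re s"
  shows "cmod (1 - s) \<le> cmod (1 - w)"
proof -
  have "1 - w = (1 - s) * (1 + s)" using assms(1) by (simp add: power2_eq_square algebra_simps)
  then have "cmod (1 - w) = cmod (1 - s) * cmod (1 + s)" by (simp add: norm_mult)
  moreover have "1 \<le> cmod (1 + s)" using complex_Re_le_cmod[of "1 + s"] assms(2) by simp
  ultimately show ?thesis by (simp add: mult_le_cancel_left1)
qed

lemma Re_root_le:
  fixes s w :: complex
  assumes "s^2 = w"
  shows "Re s \<le> (3 + (cmod w)^2) / 4"
proof -
  have "0 \<le> (cmod s - 1)^2 * ((cmod s)^2 + 2 * cmod s + 3)" by simp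
  also have "\<dots> = (cmod s)^4 - 4 * cmod s + 3" by algebra
  also have "(cmod s)^4 = (cmod w)^2"
  proof -
    have "cmod w = (cmod s)^2" using assms by (metis norm_power)
    then show ?thesis by (simp add: power2_eq_square power4_eq_xxxx mult.assoc)
  qed
  finally show ?thesis using complex_Re_le_cmod[of s] by simp
qed

lemma norm_inverse_le_inverse_Re:
  fixes z :: complex
  assumes "0 < Re z"
  shows "cmod (inverse z) \<le> 1 / Re z"
  using assms complex_Re_le_cmod[of z] by (simp add: norm_inverse divide_inverse le_imp_inverse_le)

lemma le_one_plus_power2: "t \<le> 1 + t^2" for t :: real
  using zero_le_power2[of "t - 1/2"] by (simp add: power2_eq_square field_simps)

lemma mult_power2_less_one:
  fixes d t :: real
  assumes "0 < d" and "0 < t" and "t < 1 / sqrt d"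
  shows "d * t^2 < 1"
proof -
  have "t * sqrt d < 1" using assms by (simp add: less_divide_eq)
  then have "(t * sqrt d)^2 < 1^2" using assms by (intro power_strict_mono) auto
  then show ?thesis using assms(1) by (simp add: power_mult_distrib mult.commute)
qed

context
  fixes a b \<alpha>h :: real
  assumes a0: "0 < a" and ab: "a < b" and al0: "0 < \<alpha>h" and alb: "(b - a) * \<alpha>h^2 < 1"
begin

text \<open>\<open>c_low\<close> and \<open>c_high \<rho>\<close> are the coercivity constants on the low (\<open>x\<^sup>2 \<le> \<rho>\<close>) and high
  (\<open>x\<^sup>2 \<ge> \<rho>\<close>) frequencies; the \<open>K\<close>'s are the constants of the resulting estimates.\<close>
definition "gap = (1 - (b-a)*\<alpha>h^2)/8"
definition "c_low = min gap ((b-a)/(2*(1+2*b)^2))"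
definition "K_V = (8*b^2/a) * (1+\<alpha>h^2) / (\<alpha>h * c_low)"
definition "K_E = 4*(1+b)^2 * (1+\<alpha>h^2)^2 / (\<alpha>h * c_low)^2"
definition c_high where "c_high \<rho> = (b-a)*(a+b) / (4*(1/\<rho> + 2*b)^2)"
definition K_lhs where "K_lhs \<rho> = (b/a) / (\<alpha>h * c_high \<rho>)"
definition "K_lim = 1 / (\<alpha>h * (3/2*(b-a)))"

lemma gap_pos: "gap > 0" using alb by (simp add: gap_def)

lemma c_low_pos: "c_low > 0" using gap_pos a0 ab by (simp add: c_low_def)

lemma K_V_nonneg: "K_V \<ge> 0" using a0 ab al0 c_low_pos by (simp add: K_V_def)

lemma K_E_nonneg: "K_E \<ge> 0" using a0 ab al0 c_low_pos by (simp add: K_E_def)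

lemma c_high_pos: "0 < \<rho> \<Longrightarrow> c_high \<rho> > 0"
  using a0 ab add_pos_pos[of "1/\<rho>" "2*b"] by (simp add: c_high_def)

lemma K_lhs_nonneg: "0 < \<rho> \<Longrightarrow> K_lhs \<rho> \<ge> 0"
  using a0 ab al0 c_high_pos[of \<rho>] by (simp add: K_lhs_def)

lemma K_lim_nonneg: "K_lim \<ge> 0" using ab al0 by (simp add: K_lim_def)

context
  fixes \<epsilon> x :: real and \<Lambda> :: complex
  assumes e0: "0 < \<epsilon>"
    and sm1: "b * (\<epsilon>*\<alpha>h)^2 \<le> 1/4"
    and sm2: "32 * b * (b-a) * \<alpha>h^2 * (\<epsilon>*\<alpha>h)^2 \<le> 1 - (b-a)*\<alpha>h^2"
    and ReL: "Re \<Lambda> \<ge> - (\<alpha>h * (1 - (b - a) * \<alpha>h^2)) / 2"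
begin

definition "eta = \<epsilon>*\<alpha>h"
definition "xi = Complex x eta"
definition "xi_sq = xi^2"
definition "B_xi = 1 + complex_of_real b * xi_sq"
definition "w_xi = (1 + complex_of_real a * xi_sq) / B_xi"
definition "S_xi = csqrt w_xi"
definition "c_eps = 1 + \<epsilon>^2/2"
definition "lam_eps = complex_of_real (\<epsilon>^3/2) * \<Lambda>"
definition "Q_xi = \<i> * xi * complex_of_real c_eps - \<i> * xi * S_xi"
definition "T_xi = complex_of_real (\<epsilon>^2) + complex_of_real (b-a) * xi_sq"
definition "Q0_xi = \<i> * xi * T_xi / 2"
definition "E_xi = complex_of_real c_eps - S_xi - T_xi/2"
definition "G_xi = (b-a)*(2*x^2 + (a+b)*(cmod xi_sq)^2)/(4*(cmod B_xi)^2)"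

lemma eta_pos: "eta > 0" using e0 al0 by (simp add: eta_def)
lemma b_eta_power2_le: "b * eta^2 \<le> 1/4" using sm1 by (simp add: eta_def)
lemma Re_xi: "Re xi = x" and Im_xi: "Im xi = eta" by (simp_all add: xi_def)
lemma Re_xi_sq: "Re xi_sq = x^2 - eta^2" and Im_xi_sq: "Im xi_sq = 2*x*eta"
  by (simp_all add: xi_sq_def xi_def power2_eq_square)
lemma norm_xi_power2: "(cmod xi)^2 = x^2 + eta^2" by (simp add: xi_def cmod_power2)
lemma norm_xi_sq: "cmod xi_sq = x^2 + eta^2" using norm_xi_power2 by (simp add: xi_sq_def norm_power)
lemma norm_xi_power2_eq: "(cmod xi)^2 = cmod xi_sq" by (simp add: xi_sq_def norm_power)
lemma eta_power2: "eta^2 = \<epsilon>^2 * \<alpha>h^2" by (simp add: eta_def power_mult_distrib)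
lemma Re_B_xi: "Re B_xi = 1 + b*(x^2 - eta^2)" by (simp add: B_xi_def Re_xi_sq)
lemma Im_B_xi: "Im B_xi = b * (2*x*eta)" by (simp add: B_xi_def Im_xi_sq)
lemma Re_B_xi_ge: "Re B_xi \<ge> 1 - b*eta^2"
  using Re_B_xi ab a0 by (simp add: algebra_simps)
lemma Re_B_xi_ge_3_4: "Re B_xi \<ge> 3/4" using Re_B_xi_ge b_eta_power2_le by linarith
lemma norm_B_xi_ge: "cmod B_xi \<ge> 1/2" using Re_B_xi_ge_3_4 complex_Re_le_cmod[of B_xi] by linarith
lemma B_xi_nonzero: "B_xi \<noteq> 0" using norm_B_xi_ge by auto
lemma norm_B_xi_le: "cmod B_xi \<le> 1 + b * cmod xi_sq"
  unfolding B_xi_def using norm_triangle_ineq[of 1 "complex_of_real b * xi_sq"] ab a0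
  by (simp add: norm_mult)
lemma norm_xi_sq_le_norm_B_xi: "b * cmod xi_sq \<le> 3 * cmod B_xi"
proof -
  have "cmod (complex_of_real b * xi_sq) \<le> cmod B_xi + 1"
    using norm_triangle_ineq4[of B_xi 1] unfolding B_xi_def by simp
  thus ?thesis using norm_B_xi_ge ab a0 by (simp add: norm_mult)
qed

lemma norm_power2_one_plus_xi_sq: "(cmod (1 + complex_of_real t * xi_sq))^2 = 1 + 2*t*Re xi_sq + t^2 * (cmod xi_sq)^2"
  by (simp only: cmod_power2) (simp add: power2_eq_square algebra_simps)

lemma norm_power2_B_xi_diff: "(cmod B_xi)^2 - (cmod (1 + complex_of_real a * xi_sq))^2
    = (b-a) * (2 * Re xi_sq + (a+b) * (cmod xi_sq)^2)"
  unfolding B_xi_def norm_power2_one_plus_xi_sq by (simp add: power2_eq_square algebra_simps)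

lemma w_xi_partial_fractions: "w_xi = complex_of_real (a/b) + complex_of_real ((b-a)/b) * inverse B_xi"
proof -
  have "a/b*b = a" using a0 ab by simp
  hence ab1: "complex_of_real (a/b) * complex_of_real b = complex_of_real a"
    by (metis of_real_mult)
  have "a/b + (b-a)/b = 1" using a0 ab by (simp add: diff_divide_distrib)
  hence ab2: "complex_of_real (a/b) + complex_of_real ((b-a)/b) = 1"
    by (metis of_real_add of_real_1)
  have "(complex_of_real (a/b) + complex_of_real ((b-a)/b) * inverse B_xi) * B_xi
      = complex_of_real (a/b) * B_xi + complex_of_real ((b-a)/b)"
    using B_xi_nonzero by (simp add: algebra_simps)
  also have "\<dots> = complex_of_real (a/b) + complex_of_real ((b-a)/b) + complex_of_real (a/b) * complex_of_real b * xi_sq"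
    unfolding B_xi_def by (simp add: algebra_simps)
  also have "\<dots> = 1 + complex_of_real a * xi_sq" unfolding ab1 ab2 ..
  finally have "(complex_of_real (a/b) + complex_of_real ((b-a)/b) * inverse B_xi) * B_xi = 1 + complex_of_real a * xi_sq"
    (is "?X * _ = _") .
  hence "(1 + complex_of_real a * xi_sq) / B_xi = ?X * B_xi / B_xi" by simp
  also have "\<dots> = ?X" using B_xi_nonzero by (rule nonzero_mult_div_cancel_right)
  finally show ?thesis unfolding w_xi_def .
qed

lemma Re_w_xi: "Re w_xi = a/b + ((b-a)/b) * Re B_xi / (cmod B_xi)^2"
  unfolding w_xi_partial_fractions cmod_power2 by simp

lemma Im_w_xi: "Im w_xi = - ((b-a) * (2*x*eta)) / (cmod B_xi)^2"
  using ab a0 unfolding w_xi_partial_fractions cmod_power2 by (simp add: Im_B_xi)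

lemma Re_w_xi_ge: "Re w_xi \<ge> a/b"
proof -
  have "((b-a)/b) * Re B_xi / (cmod B_xi)^2 \<ge> 0" using ab a0 Re_B_xi_ge_3_4 by simp
  thus ?thesis using Re_w_xi by simp
qed

lemma Re_w_xi_pos: "Re w_xi > 0"
proof -
  have "a/b > 0" using a0 ab by simp
  thus ?thesis using Re_w_xi_ge by linarith
qed

lemma norm_w_xi_le: "cmod w_xi \<le> 3"
proof -
  have "cmod w_xi \<le> cmod (complex_of_real (a/b)) + cmod (complex_of_real ((b-a)/b) / B_xi)"
    unfolding w_xi_partial_fractions divide_inverse by (rule norm_triangle_ineq)
  also have "\<dots> = a/b + ((b-a)/b) / cmod B_xi" using a0 ab by (simp add: norm_divide norm_mult norm_inverse divide_inverse del: of_real_diff of_real_divide)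
  also have "\<dots> \<le> 1 + 1 * 2"
  proof (rule add_mono)
    show "a/b \<le> 1" using a0 ab by simp
    have "((b-a)/b) / cmod B_xi \<le> ((b-a)/b) / (1/2)"
      using norm_B_xi_ge a0 ab by (intro divide_left_mono) auto
    also have "\<dots> \<le> 1 * 2" using a0 ab by (simp add: divide_le_eq)
    finally show "((b-a)/b) / cmod B_xi \<le> 1 * 2" .
  qed
  finally show ?thesis by simp
qed

lemma one_minus_w_xi: "1 - w_xi = complex_of_real (b-a) * xi_sq / B_xi"
proof -
  have "B_xi - (1 + complex_of_real a * xi_sq) = complex_of_real (b-a) * xi_sq"
    by (simp add: B_xi_def algebra_simps)
  moreover have "1 - (1 + complex_of_real a * xi_sq) / B_xi = (B_xi - (1 + complex_of_real a * xi_sq)) / B_xi"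
    using B_xi_nonzero by (simp add: diff_divide_distrib)
  ultimately show ?thesis unfolding w_xi_def by simp
qed

lemma norm_one_minus_w_xi: "cmod (1 - w_xi) \<le> 2 * (b-a) * cmod xi_sq"
proof -
  have "cmod (1 - w_xi) = (b-a) * cmod xi_sq / cmod B_xi" using ab
    by (simp add: one_minus_w_xi norm_mult norm_divide del: of_real_diff)
  also have "\<dots> \<le> (b-a) * cmod xi_sq / (1/2)" using norm_B_xi_ge ab
    by (intro divide_left_mono) auto
  finally have "cmod (1 - w_xi) \<le> (b-a) * cmod xi_sq * 2" by simp
  thus ?thesis by (simp add: algebra_simps)
qed

lemma S_xi_power2: "S_xi^2 = w_xi" by (simp add: S_xi_def)

lemma Re_S_xi_nonneg: "Re S_xi \<ge> 0" unfolding S_xi_def by (rule Re_csqrt)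

lemma Re_S_xi_pos: "Re S_xi > 0"
  by (rule Re_root_pos[OF S_xi_power2 Re_S_xi_nonneg Re_w_xi_pos])

lemma norm_S_xi_power2: "(cmod S_xi)^2 = cmod w_xi" by (simp add: S_xi_power2 flip: norm_power)

lemma norm_one_minus_S_xi_le: "cmod (1 - S_xi) \<le> 2 * (b-a) * cmod xi_sq"
  using norm_one_minus_root_le[OF S_xi_power2 Re_S_xi_nonneg] norm_one_minus_w_xi by linarith

lemma norm_S_xi_ge: "cmod S_xi \<ge> a/b"
proof -
  have h1: "(cmod S_xi)^2 \<ge> a/b" using norm_S_xi_power2 Re_w_xi_ge complex_Re_le_cmod[of w_xi] by linarith
  have h2: "a/b \<le> 1" using a0 ab by simp
  show ?thesis
  proof (cases "cmod S_xi \<le> 1")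
    case True
    hence "(cmod S_xi)^2 \<le> cmod S_xi" by (simp add: power2_eq_square mult_left_le)
    thus ?thesis using h1 by linarith
  next
    case False thus ?thesis using h2 by linarith
  qed
qed

lemma norm_S_xi_le: "cmod S_xi \<le> 2"
proof -
  have "(cmod S_xi)^2 \<le> 2^2" using norm_S_xi_power2 norm_w_xi_le by simp
  thus ?thesis by (rule power2_le_imp_le) simp
qed

lemma S_xi_nonzero: "S_xi \<noteq> 0"
proof -
  have "a/b > 0" using a0 ab by simp
  hence "cmod S_xi > 0" using norm_S_xi_ge by linarith
  thus ?thesis by auto
qed

lemma Re_Q_xi: "Re Q_xi = - eta * c_eps + x * Im S_xi + eta * Re S_xi"
  by (simp add: Q_xi_def Re_xi Im_xi algebra_simps)

lemma x_Im_S_xi_nonpos: "x * Im S_xi \<le> 0"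
proof -
  have "2 * Re S_xi * (x * Im S_xi) = x * Im w_xi" using S_xi_power2[symmetric] by (simp add: power2_eq_square algebra_simps)
  also have "\<dots> = - ((b-a) * (2*x^2*eta)) / (cmod B_xi)^2"
    by (simp add: Im_w_xi power2_eq_square algebra_simps)
  also have "\<dots> \<le> 0" using ab eta_pos by (simp add: divide_nonpos_pos)
  finally have "2 * Re S_xi * (x * Im S_xi) \<le> 0" .
  thus ?thesis using Re_S_xi_pos by (simp add: mult_le_0_iff)
qed

lemma norm_w_xi_power2: "(cmod w_xi)^2 = (cmod (1 + complex_of_real a * xi_sq))^2 / (cmod B_xi)^2"
  by (simp add: w_xi_def norm_divide power_divide)

lemma norm_B_xi_power2_pos: "(cmod B_xi)^2 > 0" using B_xi_nonzero by simp

lemma c_eps_minus_Re_bound: "c_eps - (3 + (cmod w_xi)^2)/4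
   = \<epsilon>^2/2 - (b-a)*eta^2/(2*(cmod B_xi)^2) + G_xi"
proof -
  have "c_eps - (3 + (cmod w_xi)^2)/4 = \<epsilon>^2/2 + ((cmod B_xi)^2 - (cmod (1 + complex_of_real a * xi_sq))^2) / (4*(cmod B_xi)^2)"
    using norm_B_xi_power2_pos unfolding norm_w_xi_power2 c_eps_def by (simp add: field_simps)
  also have "\<dots> = \<epsilon>^2/2 + (b-a) * (2 * (x^2 - eta^2) + (a+b) * (cmod xi_sq)^2) / (4*(cmod B_xi)^2)"
    unfolding norm_power2_B_xi_diff Re_xi_sq ..
  also have "\<dots> = \<epsilon>^2/2 - (b-a)*eta^2/(2*(cmod B_xi)^2) + G_xi"
    unfolding G_xi_def using norm_B_xi_power2_pos by (simp add: field_simps)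
  finally show ?thesis .
qed

lemma inverse_norm_B_xi_power2_le: "1 / (cmod B_xi)^2 \<le> 1 + 8 * b * eta^2"
proof -
  define t where "t = b * eta^2"
  have t0: "0 \<le> t" using ab a0 by (simp add: t_def)
  have t1: "t \<le> 1/4" using b_eta_power2_le by (simp add: t_def)
  have "1 - t \<le> cmod B_xi" using Re_B_xi_ge complex_Re_le_cmod[of B_xi] by (simp add: t_def)
  hence "(1 - t)^2 \<le> (cmod B_xi)^2" using t1 by (intro power_mono) auto
  moreover have "1 \<le> (1-t)^2 * (1 + 8*t)"
  proof -
    have "(1-t)^2 * (1 + 8*t) = 1 + t * (6 - 15*t + 8*t^2)" by (simp add: power2_eq_square algebra_simps)
    moreover have "6 - 15*t + 8*t^2 \<ge> 0" using t0 t1 zero_le_power2[of t] by linarith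
    ultimately show ?thesis using t0 by simp
  qed
  ultimately have "1 \<le> (cmod B_xi)^2 * (1 + 8*t)" using t0
    by (smt (verit) mult_right_mono)
  hence h: "1 \<le> (cmod B_xi)^2 * (1 + 8*b*eta^2)" by (simp add: t_def algebra_simps)
  show ?thesis unfolding pos_divide_le_eq[OF norm_B_xi_power2_pos] using h by (simp only: mult.commute)
qed

lemma G_xi_nonneg: "G_xi \<ge> 0" using ab a0 by (simp add: G_xi_def)

lemma Re_uminus_Q_xi_ge: "Re (- Q_xi) \<ge> eta * (\<epsilon>^2/2 - (b-a)*eta^2*(1 + 8*b*eta^2)/2 + G_xi)"
proof -
  have "Re (- Q_xi) \<ge> eta * (c_eps - Re S_xi)" using Re_Q_xi x_Im_S_xi_nonpos by (simp add: algebra_simps)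
  also have "eta * (c_eps - Re S_xi) \<ge> eta * (c_eps - (3 + (cmod w_xi)^2)/4)"
    using Re_root_le[OF S_xi_power2] eta_pos by (intro mult_left_mono) auto
  also have "c_eps - (3 + (cmod w_xi)^2)/4 \<ge> \<epsilon>^2/2 - (b-a)*eta^2*(1 + 8*b*eta^2)/2 + G_xi"
  proof -
    have "(b-a)*eta^2 * (1 / (cmod B_xi)^2) \<le> (b-a)*eta^2 * (1 + 8*b*eta^2)"
      using inverse_norm_B_xi_power2_le ab by (intro mult_left_mono) auto
    thus ?thesis unfolding c_eps_minus_Re_bound by simp
  qed
  hence "eta * (c_eps - (3 + (cmod w_xi)^2)/4) \<ge> eta * (\<epsilon>^2/2 - (b-a)*eta^2*(1 + 8*b*eta^2)/2 + G_xi)"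
    using eta_pos by (intro mult_left_mono) auto
  finally show ?thesis by linarith
qed

lemma Re_lam_eps_ge: "Re lam_eps \<ge> - (eta * \<epsilon>^2 * (1 - (b-a)*\<alpha>h^2)) / 4"
proof -
  have "- (eta * \<epsilon>^2 * (1 - (b-a)*\<alpha>h^2)) / 4 = \<epsilon>^3/2 * (- (\<alpha>h * (1 - (b - a) * \<alpha>h^2)) / 2)"
    unfolding eta_def by (simp add: power3_eq_cube power2_eq_square field_simps)
  also have "\<dots> \<le> \<epsilon>^3/2 * Re \<Lambda>"
    using ReL e0 by (intro mult_left_mono) auto
  also have "\<dots> = Re lam_eps" by (simp add: lam_eps_def)
  finally show ?thesis .
qed

lemma Re_lam_minus_Q_xi_ge: "Re (lam_eps - Q_xi) \<ge> eta * (\<epsilon>^2 * gap + G_xi)"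
proof -
  define kk where "kk = (b-a)*\<alpha>h^2"
  define P where "P = b*(b-a)*\<alpha>h^2*eta^2"
  have h1: "Re (lam_eps - Q_xi) \<ge> - (eta * \<epsilon>^2 * (1 - kk)) / 4
      + eta * (\<epsilon>^2/2 - (b-a)*eta^2*(1 + 8*b*eta^2)/2 + G_xi)"
    using Re_lam_eps_ge Re_uminus_Q_xi_ge unfolding kk_def by simp
  have h3: "32 * P \<le> 1 - kk"
    using sm2 unfolding kk_def eta_def P_def by (simp add: algebra_simps)
  have key: "- (eta * \<epsilon>^2 * (1 - kk)) / 4
      + eta * (\<epsilon>^2/2 - (b-a)*eta^2*(1 + 8*b*eta^2)/2 + G_xi)
      = eta * (\<epsilon>^2 * gap + G_xi) + eta * \<epsilon>^2 * ((1 - kk) - 32 * P) / 8"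
    unfolding kk_def P_def gap_def eta_def by (simp add: field_simps power2_eq_square)
  have "eta * \<epsilon>^2 * ((1 - kk) - 32 * P) / 8 \<ge> 0" using h3 eta_pos by simp
  thus ?thesis using h1 key by linarith
qed

lemma Re_uminus_Q0_xi: "Re (- Q0_xi) = eta * (\<epsilon>^2 + 3*(b-a)*x^2 - (b-a)*eta^2) / 2"
  by (simp add: Q0_xi_def T_xi_def Re_xi Im_xi Re_xi_sq Im_xi_sq power2_eq_square field_simps)

lemma Re_lam_minus_Q0_xi_ge: "Re (lam_eps - Q0_xi) \<ge> eta * (2 * gap * \<epsilon>^2 + 3/2 * (b-a) * x^2)"
proof -
  have "Re (lam_eps - Q0_xi) = Re lam_eps + Re (- Q0_xi)" by simp
  hence "Re (lam_eps - Q0_xi) \<ge> - (eta * \<epsilon>^2 * (1 - (b-a)*\<alpha>h^2)) / 4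
     + eta * (\<epsilon>^2 + 3*(b-a)*x^2 - (b-a)*eta^2) / 2" using Re_lam_eps_ge Re_uminus_Q0_xi by linarith
  moreover have "- (eta * \<epsilon>^2 * (1 - (b-a)*\<alpha>h^2)) / 4
     + eta * (\<epsilon>^2 + 3*(b-a)*x^2 - (b-a)*eta^2) / 2 = eta * (2 * gap * \<epsilon>^2 + 3/2 * (b-a) * x^2)"
    unfolding gap_def eta_def by (simp add: field_simps power2_eq_square)
  ultimately show ?thesis by simp
qed

lemma norm_c_eps_plus_S_xi_ge: "cmod (complex_of_real c_eps + S_xi) \<ge> 1"
proof -
  have "Re (complex_of_real c_eps + S_xi) \<ge> 1" using Re_S_xi_pos by (simp add: c_eps_def)
  thus ?thesis using complex_Re_le_cmod by (meson order.trans)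
qed

lemma E_xi_factorization: "E_xi * (complex_of_real c_eps + S_xi)
   = complex_of_real (\<epsilon>^4/4) - complex_of_real ((b-a)*b) * xi_sq^2 / B_xi
     + T_xi * ((1 - S_xi) - complex_of_real (\<epsilon>^2/2)) / 2"
proof -
  define X where "X = complex_of_real (b-a) * xi_sq / B_xi"
  have bu: "complex_of_real b * xi_sq = B_xi - 1" by (simp add: B_xi_def)
  have u2D: "complex_of_real ((b-a)*b) * xi_sq^2 / B_xi = complex_of_real (b-a) * xi_sq - X"
  proof -
    have "complex_of_real ((b-a)*b) * xi_sq^2 = complex_of_real (b-a) * xi_sq * (complex_of_real b * xi_sq)"
      unfolding of_real_mult by (simp add: power2_eq_square mult_ac)
    also have "\<dots> = complex_of_real (b-a) * xi_sq * (B_xi - 1)" unfolding bu ..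
    finally show ?thesis unfolding X_def using B_xi_nonzero by (simp add: field_simps)
  qed
  have "E_xi * (complex_of_real c_eps + S_xi) = (complex_of_real c_eps)^2 - S_xi^2 - T_xi*(complex_of_real c_eps + S_xi)/2"
    unfolding E_xi_def by (simp add: algebra_simps power2_eq_square)
  also have "\<dots> = (complex_of_real c_eps)^2 - (1 - X) - T_xi*(complex_of_real c_eps + S_xi)/2"
    unfolding S_xi_power2 X_def one_minus_w_xi[symmetric] by simp
  also have "\<dots> = complex_of_real (\<epsilon>^4/4) - (complex_of_real (b-a) * xi_sq - X)
     + T_xi * ((1 - S_xi) - complex_of_real (\<epsilon>^2/2)) / 2"
    unfolding T_xi_def c_eps_def
    by (simp add: field_simps power2_eq_square power4_eq_xxxx del: of_real_diff)
  finally show ?thesis unfolding u2D .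
qed

lemma norm_T_xi_le: "cmod T_xi \<le> \<epsilon>^2 + (b-a) * cmod xi_sq"
proof -
  have "cmod T_xi \<le> cmod (complex_of_real (\<epsilon>^2)) + cmod (complex_of_real (b-a) * xi_sq)"
    unfolding T_xi_def by (rule norm_triangle_ineq)
  thus ?thesis using ab by (simp add: norm_mult del: of_real_diff of_real_power)
qed

lemma norm_xi_sq_power2_div_B_xi_le: "cmod (complex_of_real ((b-a)*b) * xi_sq^2 / B_xi) \<le> 2 * ((b-a)*b) * (cmod xi_sq)^2"
proof -
  have "cmod (complex_of_real ((b-a)*b) * xi_sq^2 / B_xi) = ((b-a)*b) * (cmod xi_sq)^2 / cmod B_xi"
    using ab a0 by (simp add: norm_mult norm_divide norm_power del: of_real_mult of_real_diff)
  also have "\<dots> \<le> ((b-a)*b) * (cmod xi_sq)^2 / (1/2)"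
    using norm_B_xi_ge ab a0 by (intro divide_left_mono) auto
  finally show ?thesis by simp
qed

lemma norm_E_xi_le: "cmod E_xi \<le> 4 * (1+b)^2 * (\<epsilon>^2 + cmod xi_sq)^2"
proof -
  define U where "U = cmod xi_sq"
  define e2 where "e2 = \<epsilon>^2"
  have U0: "U \<ge> 0" and e20: "e2 \<ge> 0" by (simp_all add: U_def e2_def)
  have "cmod E_xi \<le> cmod E_xi * cmod (complex_of_real c_eps + S_xi)"
    using norm_c_eps_plus_S_xi_ge mult_left_mono[of 1 "cmod (complex_of_real c_eps + S_xi)" "cmod E_xi"] by simp
  also have "\<dots> = cmod (E_xi * (complex_of_real c_eps + S_xi))" by (simp add: norm_mult)
  also have "\<dots> \<le> cmod (complex_of_real (\<epsilon>^4/4)) + cmod (complex_of_real ((b-a)*b) * xi_sq^2 / B_xi)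
     + cmod (T_xi * ((1 - S_xi) - complex_of_real (\<epsilon>^2/2)) / 2)"
    unfolding E_xi_factorization by (rule order.trans[OF norm_triangle_ineq norm_triangle_ineq4[THEN add_right_mono]])
  also have "\<dots> \<le> e2^2/4 + 2 * ((b-a)*b) * U^2 + (e2 + (b-a)*U) * (2*(b-a)*U + e2/2) / 2"
  proof (intro add_mono)
    show "cmod (complex_of_real (\<epsilon>^4/4)) \<le> e2^2/4"
    proof -
      have "\<epsilon>^4/4 \<ge> 0" by simp
      hence "cmod (complex_of_real (\<epsilon>^4/4)) = \<epsilon>^4/4" by (simp only: norm_of_real abs_of_nonneg)
      moreover have "e2^2 = \<epsilon>^4" by (simp add: e2_def flip: power_mult)
      ultimately show ?thesis by simp
    qed
    show "cmod (complex_of_real ((b-a)*b) * xi_sq^2 / B_xi) \<le> 2 * ((b-a)*b) * U^2" using norm_xi_sq_power2_div_B_xi_le by (simp add: U_def)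
    have "cmod ((1 - S_xi) - complex_of_real (\<epsilon>^2/2)) \<le> cmod (1 - S_xi) + cmod (complex_of_real (\<epsilon>^2/2))"
      by (rule norm_triangle_ineq4)
    also have "\<dots> \<le> 2*(b-a)*U + e2/2"
      using norm_one_minus_S_xi_le by (simp add: U_def e2_def norm_power)
    finally have h1: "cmod ((1 - S_xi) - complex_of_real (\<epsilon>^2/2)) \<le> 2*(b-a)*U + e2/2" .
    have h2: "cmod T_xi \<le> e2 + (b-a)*U" using norm_T_xi_le by (simp add: U_def e2_def)
    have "cmod T_xi * cmod ((1 - S_xi) - complex_of_real (\<epsilon>^2/2)) \<le> (e2 + (b-a)*U) * (2*(b-a)*U + e2/2)"
      using h1 h2 by (intro mult_mono) (auto intro: order.trans[OF norm_ge_zero])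
    thus "cmod (T_xi * ((1 - S_xi) - complex_of_real (\<epsilon>^2/2)) / 2) \<le> (e2 + (b-a)*U) * (2*(b-a)*U + e2/2) / 2"
      by (simp add: norm_mult norm_divide)
  qed
  also have "\<dots> \<le> 4 * (1+b)^2 * (e2 + U)^2" using a0 ab U0 e20 by (rule remainder_arith)
  finally show ?thesis by (simp add: U_def e2_def)
qed

lemma norm_inverse_S_xi_power_le: "n \<le> 1 \<Longrightarrow> cmod ((inverse S_xi)^n) \<le> b/a"
proof -
  assume n: "n \<le> 1"
  have ba1: "1 \<le> b/a" using a0 ab by simp
  show ?thesis
  proof (cases n)
    case 0 thus ?thesis using ba1 by simp
  next
    case (Suc m) hence n1: "n = 1" using n by simp
    have "cmod (inverse S_xi) = 1 / cmod S_xi" by (simp add: norm_inverse divide_inverse)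
    also have "\<dots> \<le> 1 / (a/b)" using norm_S_xi_ge a0 ab S_xi_nonzero by (intro divide_left_mono) (auto intro: mult_pos_pos)
    finally show ?thesis using n1 by simp
  qed
qed

lemma norm_S_B_inverse_minus_one_le: "n \<le> 1 \<Longrightarrow> cmod ((inverse S_xi)^n * inverse B_xi - 1) \<le> 8*b^2/a * cmod xi_sq"
proof -
  assume n: "n \<le> 1"
  have U0: "cmod xi_sq \<ge> 0" by simp
  have ba1: "1 \<le> b/a" using a0 ab by simp
  have oD: "cmod (1 - B_xi) = b * cmod xi_sq" using ab a0 by (simp add: B_xi_def norm_mult)
  have D0: "cmod (inverse B_xi - 1) \<le> 2*b * cmod xi_sq"
  proof -
    have "inverse B_xi - 1 = (1 - B_xi) / B_xi" using B_xi_nonzero by (simp add: field_simps)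
    hence "cmod (inverse B_xi - 1) = b * cmod xi_sq / cmod B_xi" by (simp add: norm_divide oD)
    also have "\<dots> \<le> b * cmod xi_sq / (1/2)" using norm_B_xi_ge ab a0 by (intro divide_left_mono) auto
    finally show ?thesis by simp
  qed
  show ?thesis
  proof (cases n)
    case 0
    have "2*b * cmod xi_sq \<le> 8*b^2/a * cmod xi_sq"
    proof (rule mult_right_mono[OF _ U0])
      have "2*b*1 \<le> 8*b*(b/a)" using ba1 ab a0 by (intro mult_mono) auto
      thus "2*b \<le> 8*b^2/a" by (simp add: power2_eq_square)
    qed
    thus ?thesis using D0 0 by simp
  next
    case (Suc m) hence n1: "n = 1" using n by simp
    have e: "inverse S_xi * inverse B_xi - 1 = ((1 - S_xi) - S_xi * (B_xi - 1)) / (S_xi * B_xi)"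
      using B_xi_nonzero S_xi_nonzero by (simp add: field_simps)
    have num: "cmod ((1 - S_xi) - S_xi * (B_xi - 1)) \<le> 4*b * cmod xi_sq"
    proof -
      have "cmod ((1 - S_xi) - S_xi * (B_xi - 1)) \<le> cmod (1 - S_xi) + cmod S_xi * cmod (B_xi - 1)"
        using norm_triangle_ineq4[of "1 - S_xi" "S_xi * (B_xi - 1)"] by (simp add: norm_mult)
      also have "\<dots> \<le> 2*(b-a)*cmod xi_sq + 2 * (b * cmod xi_sq)"
      proof (rule add_mono)
        show "cmod (1 - S_xi) \<le> 2*(b-a)*cmod xi_sq" by (rule norm_one_minus_S_xi_le)
        have "cmod (B_xi - 1) = b * cmod xi_sq" using oD by (simp add: norm_minus_commute)
        thus "cmod S_xi * cmod (B_xi - 1) \<le> 2 * (b * cmod xi_sq)" using norm_S_xi_le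
          mult_right_mono[OF norm_S_xi_le, of "b * cmod xi_sq"] ab a0 by simp
      qed
      also have "\<dots> \<le> 4*b * cmod xi_sq" using a0 ab U0 by (simp add: algebra_simps)
      finally show ?thesis .
    qed
    have den: "cmod (S_xi * B_xi) \<ge> (a/b) * (1/2)" unfolding norm_mult
      using norm_S_xi_ge norm_B_xi_ge a0 ab by (intro mult_mono) auto
    have "cmod (inverse S_xi * inverse B_xi - 1) \<le> 4*b * cmod xi_sq / ((a/b) * (1/2))"
      unfolding e norm_divide using num den a0 ab by (intro frac_le) auto
    also have "\<dots> = 8*b^2/a * cmod xi_sq" using a0 by (simp add: power2_eq_square field_simps)
    finally show ?thesis using n1 by simp
  qed
qed

lemma norm_xi_le_norm_B_xi: "cmod xi \<le> (2 + 3/b) * cmod B_xi"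
proof -
  have "cmod xi \<le> 1 + (cmod xi)^2" by (rule le_one_plus_power2)
  also have "(cmod xi)^2 = cmod xi_sq" by (rule norm_xi_power2_eq)
  also have "1 + cmod xi_sq \<le> 2 * cmod B_xi + 3/b * cmod B_xi"
  proof (rule add_mono)
    show "1 \<le> 2 * cmod B_xi" using norm_B_xi_ge by simp
    show "cmod xi_sq \<le> 3/b * cmod B_xi" using norm_xi_sq_le_norm_B_xi a0 ab by (simp add: field_simps)
  qed
  finally show ?thesis by (simp add: algebra_simps)
qed

lemma Q_xi_minus_Q0_xi: "Q_xi - Q0_xi = \<i> * xi * E_xi"
  by (simp add: Q_xi_def Q0_xi_def E_xi_def algebra_simps)

lemma S_sym_eq: "S_sym a b xi = S_xi"
  by (simp add: S_sym_def S_xi_def w_xi_def B_xi_def xi_sq_def)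
lemma B_sym_eq: "B_sym b xi = B_xi"
  by (simp add: B_sym_def B_xi_def xi_sq_def power_mult_distrib)
lemma Qm_sym_eq: "Qm_sym a b c_eps xi = Q_xi"
  by (simp add: Qm_sym_def Q_xi_def S_sym_eq)

lemma lhs_sym_at_xi: "lhs_sym a b c_eps lam_eps \<epsilon> j n xi
   = complex_of_real (\<epsilon>^(3-j)) * (\<i>*xi)^j * ((inverse S_xi)^n * inverse B_xi) * inverse (lam_eps - Q_xi)"
  by (simp add: lhs_sym_def S_sym_eq B_sym_eq Qm_sym_eq mult.assoc)

lemma Re_lam_minus_Q_xi_pos: "Re (lam_eps - Q_xi) > 0"
proof -
  have "eta * (\<epsilon>^2 * gap + G_xi) > 0"
    using eta_pos gap_pos G_xi_nonneg e0 by (intro mult_pos_pos add_pos_nonneg) auto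
  thus ?thesis using Re_lam_minus_Q_xi_ge by linarith
qed

lemma Re_lam_minus_Q0_xi_pos: "Re (lam_eps - Q0_xi) > 0"
proof -
  have "eta * (2 * gap * \<epsilon>^2 + 3/2 * (b-a) * x^2) > 0"
    using eta_pos gap_pos e0 ab by (intro mult_pos_pos add_pos_nonneg) auto
  thus ?thesis using Re_lam_minus_Q0_xi_ge by linarith
qed

lemma lim_sym_at_xi: "j \<le> 1 \<Longrightarrow> lim_sym a b \<Lambda> j (xi / complex_of_real \<epsilon>)
   = complex_of_real (\<epsilon>^(3-j)) * (\<i>*xi)^j * inverse (lam_eps - Q0_xi)"
proof -
  assume j: "j \<le> 1"
  have en: "complex_of_real \<epsilon> \<noteq> 0" using e0 by simp
  have key: "\<Lambda> - \<i> * (xi / complex_of_real \<epsilon>) + complex_of_real (b - a) * (\<i> * (xi / complex_of_real \<epsilon>))^3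
      = complex_of_real (2/\<epsilon>^3) * (lam_eps - Q0_xi)"
    using en unfolding lam_eps_def Q0_xi_def T_xi_def xi_sq_def
    by (simp add: field_simps power2_eq_square power3_eq_cube)
  have "lim_sym a b \<Lambda> j (xi / complex_of_real \<epsilon>)
     = 2 * (\<i> * (xi / complex_of_real \<epsilon>))^j * (complex_of_real (\<epsilon>^3/2) * inverse (lam_eps - Q0_xi))"
  proof -
    have inv: "inverse (complex_of_real (2/\<epsilon>^3) * (lam_eps - Q0_xi)) = complex_of_real (\<epsilon>^3/2) * inverse (lam_eps - Q0_xi)"
      by (simp only: inverse_mult_distrib of_real_inverse[symmetric] inverse_divide)
    show ?thesis unfolding lim_sym_def key inv by (simp only: mult.assoc)
  qed
  also have "\<dots> = complex_of_real (\<epsilon>^(3-j)) * (\<i>*xi)^j * inverse (lam_eps - Q0_xi)"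
  proof (cases j)
    case 0 thus ?thesis by simp
  next
    case (Suc m) hence j1: "j = 1" using j by simp
    have h: "2 * (\<i> * (xi / complex_of_real \<epsilon>)) * (complex_of_real (\<epsilon>^3/2) * Z)
       = complex_of_real (\<epsilon>^2) * (\<i>*xi) * Z" for Z
      using en by (simp add: field_simps power2_eq_square power3_eq_cube)
    show ?thesis using j1 h by simp
  qed
  finally show ?thesis .
qed

lemma symbol_difference_le_remainders: "n \<le> 1 \<Longrightarrow> j \<le> 1 \<Longrightarrow>
  cmod (lhs_sym a b c_eps lam_eps \<epsilon> j n xi - lim_sym a b \<Lambda> j (xi / complex_of_real \<epsilon>))
  \<le> \<epsilon>^(3-j) * (cmod xi)^j * (cmod ((inverse S_xi)^n * inverse B_xi - 1) / Re (lam_eps - Q_xi)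
      + cmod xi * cmod E_xi / (Re (lam_eps - Q_xi) * Re (lam_eps - Q0_xi)))"
proof -
  assume n: "n \<le> 1" and j: "j \<le> 1"
  define V where "V = (inverse S_xi)^n * inverse B_xi"
  define I1 where "I1 = inverse (lam_eps - Q_xi)"
  define I2 where "I2 = inverse (lam_eps - Q0_xi)"
  have nz1: "lam_eps - Q_xi \<noteq> 0" using Re_lam_minus_Q_xi_pos by auto
  have nz2: "lam_eps - Q0_xi \<noteq> 0" using Re_lam_minus_Q0_xi_pos by auto
  have dec: "V * I1 - I2 = (V - 1) * I1 + \<i> * xi * E_xi * I1 * I2"
  proof -
    have "I1 - I2 = (Q_xi - Q0_xi) * I1 * I2" unfolding I1_def I2_def using nz1 nz2
      by (simp add: field_simps)
    thus ?thesis unfolding Q_xi_minus_Q0_xi by (simp add: algebra_simps)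
  qed
  have "lhs_sym a b c_eps lam_eps \<epsilon> j n xi - lim_sym a b \<Lambda> j (xi / complex_of_real \<epsilon>)
    = complex_of_real (\<epsilon>^(3-j)) * (\<i>*xi)^j * (V * I1 - I2)"
    unfolding lhs_sym_at_xi lim_sym_at_xi[OF j] V_def I1_def I2_def by (simp add: algebra_simps)
  also have "\<dots> = complex_of_real (\<epsilon>^(3-j)) * (\<i>*xi)^j * ((V - 1) * I1 + \<i> * xi * E_xi * I1 * I2)"
    unfolding dec ..
  finally have eq: "cmod (lhs_sym a b c_eps lam_eps \<epsilon> j n xi - lim_sym a b \<Lambda> j (xi / complex_of_real \<epsilon>))
      = \<epsilon>^(3-j) * (cmod xi)^j * cmod ((V - 1) * I1 + \<i> * xi * E_xi * I1 * I2)"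
    using e0 by (simp add: norm_mult norm_power)
  have i1: "cmod I1 \<le> 1 / Re (lam_eps - Q_xi)" unfolding I1_def by (rule norm_inverse_le_inverse_Re[OF Re_lam_minus_Q_xi_pos])
  have i2: "cmod I2 \<le> 1 / Re (lam_eps - Q0_xi)" unfolding I2_def by (rule norm_inverse_le_inverse_Re[OF Re_lam_minus_Q0_xi_pos])
  have "cmod ((V - 1) * I1 + \<i> * xi * E_xi * I1 * I2) \<le> cmod (V - 1) * cmod I1 + cmod xi * cmod E_xi * cmod I1 * cmod I2"
    using norm_triangle_ineq[of "(V - 1) * I1" "\<i> * xi * E_xi * I1 * I2"] by (simp add: norm_mult)
  also have "\<dots> \<le> cmod (V - 1) * (1 / Re (lam_eps - Q_xi)) + cmod xi * cmod E_xi * (1 / Re (lam_eps - Q_xi)) * (1 / Re (lam_eps - Q0_xi))"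
    using i1 i2 Re_lam_minus_Q_xi_pos Re_lam_minus_Q0_xi_pos by (intro add_mono mult_mono mult_left_mono) auto
  also have "\<dots> = cmod (V - 1) / Re (lam_eps - Q_xi) + cmod xi * cmod E_xi / (Re (lam_eps - Q_xi) * Re (lam_eps - Q0_xi))"
    by simp
  finally have "cmod ((V - 1) * I1 + \<i> * xi * E_xi * I1 * I2) \<le> \<dots>" .
  hence "\<epsilon>^(3-j) * (cmod xi)^j * cmod ((V - 1) * I1 + \<i> * xi * E_xi * I1 * I2)
     \<le> \<epsilon>^(3-j) * (cmod xi)^j * (cmod (V - 1) / Re (lam_eps - Q_xi) + cmod xi * cmod E_xi / (Re (lam_eps - Q_xi) * Re (lam_eps - Q0_xi)))"
    using e0 by (intro mult_left_mono) auto
  thus ?thesis unfolding eq V_def .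
qed

lemma coercivity_low:
  assumes x2: "x^2 \<le> \<rho>" and r1: "\<rho> \<le> 1" and q: "eta^2 \<le> \<rho>"
  shows "\<epsilon>*\<alpha>h*c_low * (\<epsilon>^2 + x^2) \<le> Re (lam_eps - Q_xi)"
    and "\<epsilon>*\<alpha>h*c_low * (\<epsilon>^2 + x^2) \<le> Re (lam_eps - Q0_xi)"
proof -
  define \<kappa> where "\<kappa> = (b-a)/(2*(1+2*b)^2)"
  have c_gap: "c_low \<le> gap" and c_\<kappa>: "c_low \<le> \<kappa>" by (simp_all add: c_low_def \<kappa>_def)
  have "cmod xi_sq \<le> 2" using norm_xi_sq x2 q r1 by linarith
  then have "cmod B_xi \<le> 1 + 2*b" using norm_B_xi_le ab a0 mult_left_mono[of "cmod xi_sq" 2 b] by linarith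
  then have B2: "(cmod B_xi)^2 \<le> (1+2*b)^2" by (intro power_mono) auto
  have "\<kappa> * x^2 = (b-a)*(2*x^2)/(4*(1+2*b)^2)" unfolding \<kappa>_def using a0 ab by (simp add: divide_simps)
  also have "\<dots> \<le> (b-a)*(2*x^2)/(4*(cmod B_xi)^2)"
    using B2 norm_B_xi_power2_pos a0 ab by (intro divide_left_mono) (auto intro!: mult_pos_pos)
  also have "\<dots> \<le> G_xi" unfolding G_xi_def using ab a0 by (intro divide_right_mono mult_left_mono) auto
  finally have G: "\<kappa> * x^2 \<le> G_xi" .
  have "c_low * (\<epsilon>^2 + x^2) \<le> \<epsilon>^2 * gap + \<kappa> * x^2"
    using c_gap c_\<kappa> by (simp add: distrib_left mult.commute mult_right_mono add_mono)
  also have "\<dots> \<le> \<epsilon>^2 * gap + G_xi" using G by simp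
  finally have "eta * (c_low * (\<epsilon>^2 + x^2)) \<le> eta * (\<epsilon>^2 * gap + G_xi)"
    using eta_pos by (intro mult_left_mono) auto
  then show "\<epsilon>*\<alpha>h*c_low * (\<epsilon>^2 + x^2) \<le> Re (lam_eps - Q_xi)"
    using Re_lam_minus_Q_xi_ge by (simp add: eta_def mult.assoc)
  have "(1::real) \<le> 2*(1+2*b)^2" using ab a0 by (simp add: power2_eq_square algebra_simps)
  then have "\<kappa> \<le> b - a" using ab by (simp add: \<kappa>_def divide_le_eq mult_le_cancel_left1)
  then have "c_low * \<epsilon>^2 \<le> 2*gap*\<epsilon>^2" and "c_low * x^2 \<le> 3/2*(b-a)*x^2"
    using c_gap c_\<kappa> gap_pos ab by (intro mult_right_mono; simp)+
  then have "eta * (c_low * (\<epsilon>^2 + x^2)) \<le> eta * (2 * gap * \<epsilon>^2 + 3/2 * (b-a) * x^2)"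
    using eta_pos by (intro mult_left_mono) (auto simp: distrib_left)
  then show "\<epsilon>*\<alpha>h*c_low * (\<epsilon>^2 + x^2) \<le> Re (lam_eps - Q0_xi)"
    using Re_lam_minus_Q0_xi_ge by (simp add: eta_def mult.assoc)
qed

lemma low_frequency_bound:
  assumes x2: "x^2 \<le> \<rho>" and r1: "\<rho> \<le> 1" and q: "eta^2 \<le> \<rho>" and n: "n \<le> 1" and j: "j \<le> 1"
  shows "cmod (lhs_sym a b c_eps lam_eps \<epsilon> j n xi - lim_sym a b \<Lambda> j (xi / complex_of_real \<epsilon>))
    \<le> (\<epsilon>^2 + 2*\<epsilon>) * K_V + (2*\<epsilon> + 2*\<rho>) * K_E"
proof -
  define ss where "ss = \<epsilon>^2 + x^2"
  define A where "A = 1 + \<alpha>h^2"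
  have s0: "ss > 0" using e0 by (simp add: ss_def add_pos_nonneg)
  have xi_sq_le: "cmod xi_sq \<le> 2*\<rho>" using norm_xi_sq x2 q by linarith
  have uA: "cmod xi_sq \<le> A * ss" and eA: "\<epsilon>^2 + cmod xi_sq \<le> A * ss"
    unfolding norm_xi_sq eta_power2 A_def ss_def by (simp_all add: algebra_simps)
  have Vb: "cmod ((inverse S_xi)^n * inverse B_xi - 1) \<le> (8*b^2/a) * A * ss"
    using norm_S_B_inverse_minus_one_le[OF n] mult_left_mono[OF uA, of "8*b^2/a"] a0 by (simp add: mult.assoc)
  have Eb: "cmod E_xi \<le> (4*(1+b)^2) * (A * ss)^2"
  proof -
    have "(\<epsilon>^2 + cmod xi_sq)^2 \<le> (A * ss)^2" using eA by (intro power_mono) auto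
    then show ?thesis using norm_E_xi_le by (smt (verit) mult_left_mono zero_le_power2 mult_nonneg_nonneg)
  qed
  have r2: "(cmod xi)^2 \<le> 2*\<rho>" using norm_xi_power2_eq xi_sq_le by simp
  then have "(cmod xi)^2 \<le> 2^2" using r1 by simp
  then have rle2: "cmod xi \<le> 2" by (rule power2_le_imp_le) simp
  have "\<epsilon>^(3-j) * (cmod xi)^j * (cmod ((inverse S_xi)^n * inverse B_xi - 1) / Re (lam_eps - Q_xi)
      + cmod xi * cmod E_xi / (Re (lam_eps - Q_xi) * Re (lam_eps - Q0_xi)))
      \<le> (\<epsilon>^2 + 2*\<epsilon>) * ((8*b^2/a)*A/(\<alpha>h*c_low)) + (2*\<epsilon> + 2*\<rho>) * ((4*(1+b)^2)*A^2/(\<alpha>h*c_low)^2)"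
    using coercivity_low[OF x2 r1 q, folded ss_def]
    by (intro low_frequency_arith[OF e0 al0 c_low_pos s0 _ _ _ j _ _ _ _ _ Vb Eb rle2 r2])
       (use a0 ab q in \<open>auto simp: A_def intro: order.trans[OF zero_le_power2]\<close>)
  then show ?thesis using order.trans[OF symbol_difference_le_remainders[OF n j]]
    unfolding K_V_def K_E_def A_def by simp
qed

lemma G_xi_ge_c_high:
  assumes x2: "\<rho> \<le> x^2" and r0: "0 < \<rho>" and q: "eta^2 \<le> \<rho>"
  shows "c_high \<rho> \<le> G_xi"
proof -
  define X where "X = x^2"
  have X0: "X > 0" using x2 r0 unfolding X_def by linarith
  have p: "0 < 1/\<rho> + 2*b" using r0 ab a0 by (simp add: add_pos_pos)
  have uX: "cmod xi_sq \<le> 2*X" and uX2: "X \<le> cmod xi_sq" using norm_xi_sq q x2 by (simp_all add: X_def)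
  have "cmod B_xi \<le> 1 + b * (2*X)" using norm_B_xi_le mult_left_mono[OF uX, of b] ab a0 by linarith
  also have "1 \<le> X/\<rho>" using x2 r0 by (simp add: X_def)
  then have "1 + b * (2*X) \<le> X/\<rho> + 2*b*X" by simp
  also have "\<dots> = (1/\<rho> + 2*b) * X" by (simp add: algebra_simps)
  finally have B_le: "cmod B_xi \<le> (1/\<rho> + 2*b) * X" .
  have "c_high \<rho> = (b-a)*(a+b)*X^2/(4*((1/\<rho> + 2*b)*X)^2)"
    unfolding c_high_def using X0 p by (simp add: power_mult_distrib)
  also have "\<dots> \<le> (b-a)*(a+b)*(cmod xi_sq)^2/(4*(cmod B_xi)^2)"
  proof (rule frac_le)
    show "0 \<le> (b-a)*(a+b)*(cmod xi_sq)^2" using a0 ab by simp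
    show "(b-a)*(a+b)*X^2 \<le> (b-a)*(a+b)*(cmod xi_sq)^2"
      using uX2 X0 a0 ab by (intro mult_left_mono power_mono) auto
    show "0 < 4*(cmod B_xi)^2" using norm_B_xi_power2_pos by simp
    show "4*(cmod B_xi)^2 \<le> 4*((1/\<rho> + 2*b)*X)^2" using B_le by (simp add: power_mono)
  qed
  also have "\<dots> \<le> G_xi"
  proof -
    have "(b-a)*((a+b)*(cmod xi_sq)^2) \<le> (b-a)*(2*x^2 + (a+b)*(cmod xi_sq)^2)"
      using ab by (intro mult_left_mono) auto
    then show ?thesis unfolding G_xi_def by (intro divide_right_mono) (auto simp: mult.assoc)
  qed
  finally show ?thesis .
qed

lemma norm_lhs_sym_at_xi_le:
  "cmod (lhs_sym a b c_eps lam_eps \<epsilon> j n xi)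
    \<le> \<epsilon>^(3-j) * (cmod xi)^j * (cmod ((inverse S_xi)^n) / (cmod B_xi * Re (lam_eps - Q_xi)))"
proof -
  have "cmod (lhs_sym a b c_eps lam_eps \<epsilon> j n xi)
      = \<epsilon>^(3-j) * (cmod xi)^j * (cmod ((inverse S_xi)^n) / cmod B_xi * cmod (inverse (lam_eps - Q_xi)))"
    unfolding lhs_sym_at_xi using e0
    by (simp add: norm_mult norm_power norm_inverse divide_inverse del: power_inverse)
  also have "\<dots> \<le> \<epsilon>^(3-j) * (cmod xi)^j * (cmod ((inverse S_xi)^n) / cmod B_xi * (1 / Re (lam_eps - Q_xi)))"
    using norm_inverse_le_inverse_Re[OF Re_lam_minus_Q_xi_pos] e0 by (intro mult_left_mono) auto
  finally show ?thesis by simp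
qed

lemma norm_lim_sym_at_xi_le:
  assumes "j \<le> 1"
  shows "cmod (lim_sym a b \<Lambda> j (xi / complex_of_real \<epsilon>)) \<le> \<epsilon>^(3-j) * (cmod xi)^j / Re (lam_eps - Q0_xi)"
proof -
  have "cmod (lim_sym a b \<Lambda> j (xi / complex_of_real \<epsilon>))
      = \<epsilon>^(3-j) * (cmod xi)^j * cmod (inverse (lam_eps - Q0_xi))"
    unfolding lim_sym_at_xi[OF assms] using e0 by (simp add: norm_mult norm_power)
  also have "\<dots> \<le> \<epsilon>^(3-j) * (cmod xi)^j * (1 / Re (lam_eps - Q0_xi))"
    using norm_inverse_le_inverse_Re[OF Re_lam_minus_Q0_xi_pos] e0 by (intro mult_left_mono) auto
  finally show ?thesis by simp
qed

lemma high_frequency_bound: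
  assumes x2: "\<rho> \<le> x^2" and r0: "0 < \<rho>" and q: "eta^2 \<le> \<rho>" and n: "n \<le> 1" and j: "j \<le> 1"
  shows "cmod (lhs_sym a b c_eps lam_eps \<epsilon> j n xi - lim_sym a b \<Lambda> j (xi / complex_of_real \<epsilon>))
    \<le> (2*\<epsilon>^2 + (2 + 3/b)*\<epsilon>) * K_lhs \<rho> + (\<epsilon>^2/\<rho> + \<epsilon>*(1/\<rho> + 2)) * K_lim"
proof -
  have "c_high \<rho> \<le> \<epsilon>^2 * gap + G_xi" using G_xi_ge_c_high[OF x2 r0 q] gap_pos by (simp add: add_increasing)
  then have "eta * c_high \<rho> \<le> eta * (\<epsilon>^2 * gap + G_xi)" using eta_pos by (intro mult_left_mono) auto
  then have Y1: "\<epsilon>*\<alpha>h*c_high \<rho> \<le> Re (lam_eps - Q_xi)"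
    using Re_lam_minus_Q_xi_ge by (simp add: eta_def mult.assoc)
  have "3/2*(b-a)*x^2 \<le> 2 * gap * \<epsilon>^2 + 3/2 * (b-a) * x^2" using gap_pos by simp
  then have "eta * (3/2*(b-a)*x^2) \<le> eta * (2 * gap * \<epsilon>^2 + 3/2 * (b-a) * x^2)"
    using eta_pos by (intro mult_left_mono) auto
  moreover have "\<epsilon>*\<alpha>h*(3/2*(b-a))*x^2 = eta * (3/2*(b-a)*x^2)" by (simp add: eta_def mult.assoc)
  ultimately have Y2: "\<epsilon>*\<alpha>h*(3/2*(b-a))*x^2 \<le> Re (lam_eps - Q0_xi)"
    using Re_lam_minus_Q0_xi_ge by linarith
  have rX: "cmod xi \<le> 1 + 2*x^2"
    using le_one_plus_power2[of "cmod xi"] norm_xi_power2_eq norm_xi_sq q x2 by linarith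
  have "cmod (lhs_sym a b c_eps lam_eps \<epsilon> j n xi) \<le> (2*\<epsilon>^2 + (2 + 3/b)*\<epsilon>) * K_lhs \<rho>"
    unfolding K_lhs_def
    by (rule order.trans[OF norm_lhs_sym_at_xi_le high_frequency_lhs_arith[OF e0 al0 c_high_pos[OF r0] _ j
          norm_B_xi_ge norm_xi_le_norm_B_xi _ norm_inverse_S_xi_power_le[OF n] Y1]]) auto
  moreover have "cmod (lim_sym a b \<Lambda> j (xi / complex_of_real \<epsilon>)) \<le> (\<epsilon>^2/\<rho> + \<epsilon>*(1/\<rho> + 2)) * K_lim"
    unfolding K_lim_def
    by (rule order.trans[OF norm_lim_sym_at_xi_le[OF j] high_frequency_lim_arith[OF e0 al0 _ r0 x2 _ rX j Y2]])
      (use ab in auto)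
  ultimately show ?thesis
    using norm_triangle_ineq4[of "lhs_sym a b c_eps lam_eps \<epsilon> j n xi" "lim_sym a b \<Lambda> j (xi / complex_of_real \<epsilon>)"]
    by linarith
qed

lemma symbol_difference_le:
  assumes r0: "0 < \<rho>" and r1: "\<rho> \<le> 1" and q: "eta^2 \<le> \<rho>" and e1: "\<epsilon> \<le> 1"
    and n: "n \<le> 1" and j: "j \<le> 1"
  shows "cmod (lhs_sym a b c_eps lam_eps \<epsilon> j n xi - lim_sym a b \<Lambda> j (xi / complex_of_real \<epsilon>))
    \<le> \<epsilon> * (3*K_V + 2*K_E + (4 + 3/b)*K_lhs \<rho> + (2/\<rho> + 2)*K_lim) + \<rho> * (2*K_E)"
proof -
  have ee: "\<epsilon>^2 \<le> \<epsilon>" using e0 e1 by (simp add: power2_eq_square mult_left_le)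
  have K: "0 \<le> K_V" "0 \<le> K_E" "0 \<le> K_lhs \<rho>" "0 \<le> K_lim"
    using K_V_nonneg K_E_nonneg K_lhs_nonneg[OF r0] K_lim_nonneg by auto
  have "0 \<le> 3/b" using ab a0 by simp
  show ?thesis
  proof (cases "x^2 \<le> \<rho>")
    case True
    have "(\<epsilon>^2 + 2*\<epsilon>) * K_V + (2*\<epsilon> + 2*\<rho>) * K_E \<le> \<epsilon> * (3*K_V + 2*K_E) + \<rho> * (2*K_E)"
      using mult_right_mono[OF ee K(1)] by (simp add: algebra_simps)
    also have "\<dots> \<le> \<epsilon> * (3*K_V + 2*K_E + (4 + 3/b)*K_lhs \<rho> + (2/\<rho> + 2)*K_lim) + \<rho> * (2*K_E)"
      using K e0 r0 \<open>0 \<le> 3/b\<close> by (intro add_right_mono mult_left_mono) auto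
    finally show ?thesis using low_frequency_bound[OF True r1 q n j] by linarith
  next
    case False
    then have x2: "\<rho> \<le> x^2" by simp
    have lim_coeff: "\<epsilon>^2/\<rho> + \<epsilon>*(1/\<rho> + 2) \<le> \<epsilon>*(2/\<rho> + 2)"
      using ee r0 by (simp add: field_simps)
    have lhs_coeff: "2*\<epsilon>^2 + (2 + 3/b)*\<epsilon> \<le> \<epsilon>*(4 + 3/b)" using ee by (simp add: algebra_simps)
    have "(2*\<epsilon>^2 + (2 + 3/b)*\<epsilon>) * K_lhs \<rho> + (\<epsilon>^2/\<rho> + \<epsilon>*(1/\<rho> + 2)) * K_lim
        \<le> (\<epsilon> * (4 + 3/b)) * K_lhs \<rho> + (\<epsilon> * (2/\<rho> + 2)) * K_lim"
      using K lhs_coeff lim_coeff by (intro add_mono mult_right_mono) auto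
    also have "\<dots> \<le> \<epsilon> * (3*K_V + 2*K_E + (4 + 3/b)*K_lhs \<rho> + (2/\<rho> + 2)*K_lim) + \<rho> * (2*K_E)"
      using K e0 r0 by (simp add: algebra_simps)
    finally show ?thesis using high_frequency_bound[OF x2 r0 q n j] by linarith
  qed
qed

lemma symbol_difference_at_frequency_le:
  assumes "0 < \<rho>" and "\<rho> \<le> 1" and "(\<epsilon>*\<alpha>h)^2 \<le> \<rho>" and "\<epsilon> \<le> 1" and "n \<le> 1" and "j \<le> 1"
    and xk: "x = \<epsilon> * k"
  shows "cmod (lhs_sym a b (1 + \<epsilon>^2/2) (complex_of_real (\<epsilon>^3/2) * \<Lambda>) \<epsilon> j n
              (complex_of_real (\<epsilon>*k) + \<i> * complex_of_real (\<epsilon>*\<alpha>h))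
            - lim_sym a b \<Lambda> j (complex_of_real k + \<i> * complex_of_real \<alpha>h))
    \<le> \<epsilon> * (3*K_V + 2*K_E + (4 + 3/b)*K_lhs \<rho> + (2/\<rho> + 2)*K_lim) + \<rho> * (2*K_E)"
proof -
  have xi: "complex_of_real (\<epsilon>*k) + \<i> * complex_of_real (\<epsilon>*\<alpha>h) = xi"
    using Re_xi Im_xi xk by (simp add: complex_eq_iff eta_def)
  have zeta: "complex_of_real k + \<i> * complex_of_real \<alpha>h = xi / complex_of_real \<epsilon>"
    using e0 Re_xi Im_xi xk by (simp add: complex_eq_iff eta_def)
  have "1 + \<epsilon>^2/2 = c_eps" and "complex_of_real (\<epsilon>^3/2) * \<Lambda> = lam_eps"
    by (simp_all add: c_eps_def lam_eps_def)
  then show ?thesis unfolding xi zeta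
    using symbol_difference_le assms by (simp add: eta_def)
qed

end

lemma symbol_difference_uniformly_small:
  assumes j: "j \<le> 1" and n: "n \<le> 1" and e0: "0 < e"
  obtains \<delta> where "0 < \<delta>"
    and "\<And>\<epsilon> \<Lambda> k. 0 < \<epsilon> \<Longrightarrow> \<epsilon> < \<delta> \<Longrightarrow> Re \<Lambda> \<ge> - (\<alpha>h * (1 - (b - a) * \<alpha>h^2)) / 2 \<Longrightarrow>
      cmod (lhs_sym a b (1 + \<epsilon>^2/2) (complex_of_real (\<epsilon>^3/2) * \<Lambda>) \<epsilon> j n
              (complex_of_real (\<epsilon>*k) + \<i> * complex_of_real (\<epsilon>*\<alpha>h))
            - lim_sym a b \<Lambda> j (complex_of_real k + \<i> * complex_of_real \<alpha>h)) \<le> e"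
proof -
  define \<rho> where "\<rho> = min 1 (e / (4 * (K_E + 1)))"
  define L where "L = 3*K_V + 2*K_E + (4 + 3/b)*K_lhs \<rho> + (2/\<rho> + 2)*K_lim"
  have \<rho>: "0 < \<rho>" "\<rho> \<le> 1" using e0 K_E_nonneg by (simp_all add: \<rho>_def)
  have "\<rho> * (2*K_E) \<le> e / (4 * (K_E + 1)) * (2 * (K_E + 1))"
    using K_E_nonneg e0 by (intro mult_mono) (auto simp: \<rho>_def)
  also have "\<dots> = e/2" using K_E_nonneg by (simp add: field_simps)
  finally have \<rho>K: "\<rho> * (2*K_E) \<le> e/2" .
  have ev: "\<forall>\<^sub>F \<epsilon> in at_right (0::real). f \<epsilon> < t" if "(f \<longlongrightarrow> 0) (at_right 0)" and "0 < t" for f :: "real \<Rightarrow> real" and t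
    using order_tendstoD(2)[OF that] .
  have to0: "((\<lambda>\<epsilon>. \<epsilon>) \<longlongrightarrow> 0) (at_right (0::real))" by (rule tendsto_ident_at)
  have "((\<lambda>\<epsilon>. (\<epsilon>*\<alpha>h)^2) \<longlongrightarrow> (0*\<alpha>h)^2) (at_right 0)"
    using to0 by (intro tendsto_power tendsto_mult tendsto_const)
  then have to0_sq: "((\<lambda>\<epsilon>. c * (\<epsilon>*\<alpha>h)^2) \<longlongrightarrow> 0) (at_right 0)" for c
    by (simp add: tendsto_mult_right_zero)
  have to0_L: "((\<lambda>\<epsilon>. \<epsilon> * L) \<longlongrightarrow> 0) (at_right 0)" using tendsto_mult_left_zero[OF to0] .
  have "\<forall>\<^sub>F \<epsilon> in at_right 0. \<epsilon> < 1 \<and> b * (\<epsilon>*\<alpha>h)^2 < 1/4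
      \<and> 32 * b * (b-a) * \<alpha>h^2 * (\<epsilon>*\<alpha>h)^2 < 1 - (b-a)*\<alpha>h^2 \<and> 1 * (\<epsilon>*\<alpha>h)^2 < \<rho> \<and> \<epsilon> * L < e/2"
    using alb \<rho> e0 by (intro eventually_conj ev to0 to0_sq to0_L) auto
  then obtain \<delta> where "0 < \<delta>" and small: "\<And>\<epsilon>. 0 < \<epsilon> \<Longrightarrow> \<epsilon> < \<delta> \<Longrightarrow> \<epsilon> < 1 \<and> b * (\<epsilon>*\<alpha>h)^2 < 1/4
      \<and> 32 * b * (b-a) * \<alpha>h^2 * (\<epsilon>*\<alpha>h)^2 < 1 - (b-a)*\<alpha>h^2 \<and> (\<epsilon>*\<alpha>h)^2 < \<rho> \<and> \<epsilon> * L < e/2"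
    unfolding eventually_at_right_field by auto
  show thesis
  proof (rule that[OF \<open>0 < \<delta>\<close>])
    fix \<epsilon> \<Lambda> k assume "0 < \<epsilon>" "\<epsilon> < \<delta>" and ReL: "Re \<Lambda> \<ge> - (\<alpha>h * (1 - (b - a) * \<alpha>h^2)) / 2"
    then have s: "\<epsilon> < 1" "b * (\<epsilon>*\<alpha>h)^2 < 1/4"
        "32 * b * (b-a) * \<alpha>h^2 * (\<epsilon>*\<alpha>h)^2 < 1 - (b-a)*\<alpha>h^2" "(\<epsilon>*\<alpha>h)^2 < \<rho>" "\<epsilon> * L < e/2"
      using small by auto
    show "cmod (lhs_sym a b (1 + \<epsilon>^2/2) (complex_of_real (\<epsilon>^3/2) * \<Lambda>) \<epsilon> j n
              (complex_of_real (\<epsilon>*k) + \<i> * complex_of_real (\<epsilon>*\<alpha>h))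
            - lim_sym a b \<Lambda> j (complex_of_real k + \<i> * complex_of_real \<alpha>h)) \<le> e" (is "?d \<le> e")
    proof -
      have "?d \<le> \<epsilon> * L + \<rho> * (2*K_E)"
        unfolding L_def using \<open>0 < \<epsilon>\<close> ReL \<rho> s j n
        by (intro symbol_difference_at_frequency_le[where x="\<epsilon>*k"]) auto
      also have "\<dots> \<le> e" using s(5) \<rho>K by linarith
      finally show ?thesis .
    qed
  qed
qed

end

theorem lemma7p3:
  fixes a b \<alpha>h :: real and j n :: nat
  assumes "0 < a" and "a < b"
    and "0 < \<alpha>h" and "\<alpha>h < 1 / sqrt (b - a)"
    and "j \<le> 1" and "n \<le> 1"
  shows "\<forall>e>0. \<exists>\<delta>>0. \<forall>\<epsilon> \<Lambda>. 0 < \<epsilon> \<and> \<epsilon> < \<delta>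
           \<and> Re \<Lambda> \<ge> - (\<alpha>h * (1 - (b - a) * \<alpha>h\<^sup>2)) / 2 \<longrightarrow>
           op_norm (\<lambda>h k.
              I_eps_inv \<epsilon> (mult_op (\<epsilon> * \<alpha>h)
                 (lhs_sym a b (1 + \<epsilon>\<^sup>2 / 2) (of_real (\<epsilon> ^ 3 / 2) * \<Lambda>) \<epsilon> j n) (I_eps \<epsilon> h)) k
              - mult_op \<alpha>h (lim_sym a b \<Lambda> j) h k) < ennreal e"
proof (intro allI impI)
  fix e :: real assume "0 < e"
  have alb: "(b - a) * \<alpha>h^2 < 1"
    using assms by (intro mult_power2_less_one) auto
  obtain \<delta> where "0 < \<delta>" and \<delta>: "\<And>\<epsilon> \<Lambda> k. 0 < \<epsilon> \<Longrightarrow> \<epsilon> < \<delta> \<Longrightarrow>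
      Re \<Lambda> \<ge> - (\<alpha>h * (1 - (b - a) * \<alpha>h^2)) / 2 \<Longrightarrow>
      cmod (lhs_sym a b (1 + \<epsilon>^2/2) (complex_of_real (\<epsilon>^3/2) * \<Lambda>) \<epsilon> j n
              (complex_of_real (\<epsilon>*k) + \<i> * complex_of_real (\<epsilon>*\<alpha>h))
            - lim_sym a b \<Lambda> j (complex_of_real k + \<i> * complex_of_real \<alpha>h)) \<le> e/2"
    using symbol_difference_uniformly_small[OF assms(1-3) alb assms(5,6), of "e/2"] \<open>0 < e\<close> by auto
  have op_le: "op_norm (\<lambda>h k. I_eps_inv \<epsilon> (mult_op (\<epsilon> * \<alpha>h)
                 (lhs_sym a b (1 + \<epsilon>\<^sup>2 / 2) (of_real (\<epsilon> ^ 3 / 2) * \<Lambda>) \<epsilon> j n) (I_eps \<epsilon> h)) k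
              - mult_op \<alpha>h (lim_sym a b \<Lambda> j) h k) \<le> ennreal (e/2)"
    if "0 < \<epsilon>" and "\<epsilon> < \<delta>" and "Re \<Lambda> \<ge> - (\<alpha>h * (1 - (b - a) * \<alpha>h^2)) / 2" for \<epsilon> \<Lambda>
    using that \<open>0 < e\<close> by (intro op_norm_rescaled_multiplier_diff_le \<delta>) auto
  have "ennreal (e/2) < ennreal e" using \<open>0 < e\<close> by (simp add: ennreal_lessI)
  then show "\<exists>\<delta>>0. \<forall>\<epsilon> \<Lambda>. 0 < \<epsilon> \<and> \<epsilon> < \<delta> \<and> Re \<Lambda> \<ge> - (\<alpha>h * (1 - (b - a) * \<alpha>h\<^sup>2)) / 2 \<longrightarrow>
      op_norm (\<lambda>h k. I_eps_inv \<epsilon> (mult_op (\<epsilon> * \<alpha>h)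
                 (lhs_sym a b (1 + \<epsilon>\<^sup>2 / 2) (of_real (\<epsilon> ^ 3 / 2) * \<Lambda>) \<epsilon> j n) (I_eps \<epsilon> h)) k
              - mult_op \<alpha>h (lim_sym a b \<Lambda> j) h k) < ennreal e"
    using \<open>0 < \<delta>\<close> op_le by (blast intro: le_less_trans)
qed

end
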